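(* In the setting below, $d(V)\subseteq V$, and the cochain complex $V$ is acyclic (has zero cohomology).
   Context: A complex subspace arrangement in $\mathbb{C}^l$ is a finite set of complex linear subspaces of $\mathbb{C}^l$ with no two distinct members $x\subset y$. For a finite set $\mathcal{C}$ of linear subspaces of a complex vector space $W$ with a linear order, $D(\mathcal{C})$ is the cochain complex over $\mathbb{Q}$ with basis all subsets $\sigma\subseteq\mathcal{C}$, where with $\vee\sigma=\bigcap_{x\in\sigma}x$ ($\vee\emptyset=W$), $\deg\sigma=2\operatorname{codim}_W(\vee\sigma)-|\sigma|$ and for $\sigma=\{x_{i_1},\dots,x_{i_r}\}$ in increasing order, $d\sigma=\sum_{j:\vee(\sigma\setminus\{x_{i_j}\})=\vee\sigma}(-1)^j(\sigma\setminus\{x_{i_j}\})$. Setting: $\mathcal{A}=\{x_0,\dots,x_n\}$ is a complex subspace arrangement in $\mathbb{C}^l$, $\mathcal{A}'=\mathcal{A}\setminus\{x_0\}$; on $\mathcal{A}'$, $y\sim z$ iff $x_0\cap y=x_0\cap z$, with classes $\mathcal{A}_1,\dots,\mathcal{A}_r$; the linear order is $x_0<x_1<\dots<x_n$ with elements of $\mathcal{A}_i$ preceding elements of $\mathcal{A}_j$ whenever $i<j$. $D(\mathcal{A}')$ is the subcomplex of $D(\mathcal{A})$ spanned by subsets not containing $x_0$. $E=\{(y,z)\in\mathcal{A}'\times\mathcal{A}'\mid y\sim z,\ y\ne z\}$. For $(u,v)\in E$, $I_{u,v}$ is the subspace of the quotient complex $D(\mathcal{A})/D(\mathcal{A}')$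 spanned by the classes of all $\{x_0,u\}\cup Y-\{x_0,v\}\cup Y$ and all $\{x_0,u,v\}\cup Y$, for $Y\subseteq\mathcal{A}\setminus\{x_0,u,v\}$, and $V=\sum_{(u,v)\in E}I_{u,v}$. *)

theory Defs
  imports "HOL-Analysis.Analysis"
begin

definition csubspace :: "(complex^'n) set \<Rightarrow> bool" where
  "csubspace S \<longleftrightarrow> 0 \<in> S \<and> (\<forall>x\<in>S. \<forall>y\<in>S. x + y \<in> S) \<and> (\<forall>(c::complex) x. x \<in> S \<longrightarrow> c *s x \<in> S)"

definition subspace_arrangement :: "(complex^'n) set set \<Rightarrow> bool" where
  "subspace_arrangement A \<longleftrightarrow> finite A \<and> (\<forall>x\<in>A. csubspace x) \<and> (\<forall>x\<in>A. \<forall>y\<in>A. x \<subseteq> y \<longrightarrow> x = y)"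

text \<open>The linear order on the arrangement is given by a distinct list xs = [x0,...,xn].\<close>
definition before :: "'a list \<Rightarrow> 'a \<Rightarrow> 'a \<Rightarrow> bool" where
  "before xs y x \<longleftrightarrow> (\<exists>i j. i < j \<and> j < length xs \<and> xs ! i = y \<and> xs ! j = x)"

text \<open>Number of elements of sigma strictly below x; x is then the (pos+1)-th element.\<close>
definition pos :: "'a list \<Rightarrow> 'a set \<Rightarrow> 'a \<Rightarrow> nat" where
  "pos xs \<sigma> x = card {y \<in> \<sigma>. before xs y x}"

text \<open>Cochains of D(C) over Q: rational coefficient functions on subsets of C.\<close>
definition cochains :: "'a set \<Rightarrow> ('a set \<Rightarrow> rat) set" where
  "cochains C = {f. \<forall>\<sigma>. f \<sigma> \<noteq> 0 \<longrightarrow> \<sigma> \<subseteq> C}"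

definition bas :: "'a set \<Rightarrow> ('a set \<Rightarrow> rat)" where
  "bas \<sigma> = (\<lambda>\<tau>. if \<tau> = \<sigma> then 1 else 0)"

text \<open>Coefficient of tau in d(sigma); the join of sigma is the intersection (Inter {} = UNIV = W).\<close>
definition dbas :: "'v set list \<Rightarrow> 'v set set \<Rightarrow> 'v set set \<Rightarrow> rat" where
  "dbas xs \<sigma> \<tau> = (\<Sum>x\<in>\<sigma>. if \<tau> = \<sigma> - {x} \<and> \<Inter>(\<sigma> - {x}) = \<Inter>\<sigma>
                       then (-1) ^ (pos xs \<sigma> x + 1) else 0)"

definition dcx :: "'v set list \<Rightarrow> ('v set set \<Rightarrow> rat) \<Rightarrow> ('v set set \<Rightarrow> rat)" where
  "dcx xs f = (\<lambda>\<tau>. \<Sum>\<sigma>\<in>Pow (set xs). f \<sigma> * dbas xs \<sigma> \<tau>)"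

definition qspan :: "('a set \<Rightarrow> rat) set \<Rightarrow> ('a set \<Rightarrow> rat) set" where
  "qspan G = {f. \<exists>S c. finite S \<and> S \<subseteq> G \<and> f = (\<lambda>t. \<Sum>g\<in>S. c g * g t)}"

text \<open>E = pairs of distinct equivalent elements of A' = set (tl xs), x0 = hd xs.\<close>
definition edges :: "'v set list \<Rightarrow> ('v set \<times> 'v set) set" where
  "edges xs = {(y, z). y \<in> set (tl xs) \<and> z \<in> set (tl xs) \<and> hd xs \<inter> y = hd xs \<inter> z \<and> y \<noteq> z}"

text \<open>Representatives in D(A) of the spanning elements of the I_{u,v}.\<close>
definition Igens :: "'v set list \<Rightarrow> ('v set set \<Rightarrow> rat) set" where
  "Igens xs =
    {(\<lambda>t. bas (insert (hd xs) (insert u Y)) t - bas (insert (hd xs) (insert v Y)) t) | u v Y.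
        (u, v) \<in> edges xs \<and> Y \<subseteq> set xs - {hd xs, u, v}}
    \<union> {bas (insert (hd xs) (insert u (insert v Y))) | u v Y.
        (u, v) \<in> edges xs \<and> Y \<subseteq> set xs - {hd xs, u, v}}"

text \<open>Preimage of V under the projection D(A) -> D(A)/D(A'), i.e. V + D(A').\<close>
definition Vpre :: "'v set list \<Rightarrow> ('v set set \<Rightarrow> rat) set" where
  "Vpre xs = qspan (Igens xs \<union> {bas \<sigma> | \<sigma>. \<sigma> \<subseteq> set (tl xs)})"

end

theory Submission
  imports Defs
begin

text \<open>
  For a class of \<open>A'\<close> with first element \<open>b\<close>, let \<open>E_b\<close> send a basis element \<open>\<sigma> \<ni> x0\<close> to
  the simplex obtained by replacing the unique member of \<open>\<sigma>\<close> in the class of \<open>b\<close> by \<open>b\<close>, and to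
  zero if \<open>\<sigma>\<close> has two or more members in that class. Modulo \<open>D(A')\<close> there is a homotopy
  \<open>id - E_b = d h_b + h_b d\<close>, where \<open>h_b\<close> adds \<open>b\<close> with a sign; the signs match because the
  classes are intervals of the order, so \<open>b\<close> has the same position as its class mate. Both
  \<open>id - E_b\<close> and \<open>h_b\<close> take values in \<open>V' = V + D(A')\<close>, and the composite \<open>P\<close> of all \<open>E_b\<close>
  kills \<open>V'\<close> modulo \<open>D(A')\<close>. Hence for \<open>c \<in> V'\<close> we get \<open>dc = (dc - P dc) + P dc\<close> with
  \<open>P dc \<equiv> d P c \<equiv> 0\<close>, so \<open>dc \<in> V'\<close>; and if \<open>dc \<in> D(A')\<close>, then
  \<open>c \<equiv> c - P c \<equiv> d (\<Sum> h_b \<dots>)\<close> with the \<open>h_b\<close>-terms in \<open>V'\<close>.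
\<close>

section \<open>Cochains, spans and linear maps\<close>

lemma cochains_zero: "(\<lambda>t. 0) \<in> cochains B"
  unfolding cochains_def by simp

lemma cochains_pointwise:
  assumes "f \<in> cochains B" "g \<in> cochains B" "\<And>\<sigma>. f \<sigma> = 0 \<Longrightarrow> g \<sigma> = 0 \<Longrightarrow> h \<sigma> = 0"
  shows "h \<in> cochains B"
  unfolding cochains_def
proof (intro CollectI allI impI)
  fix \<sigma> assume "h \<sigma> \<noteq> 0"
  then have "f \<sigma> \<noteq> 0 \<or> g \<sigma> \<noteq> 0" using assms(3) by blast
  then show "\<sigma> \<subseteq> B" using assms(1,2) unfolding cochains_def by blast
qed

lemma cochains_add: "f \<in> cochains B \<Longrightarrow> g \<in> cochains B \<Longrightarrow> (\<lambda>t. f t + g t) \<in> cochains B"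
  by (rule cochains_pointwise[of f B g]) simp_all

lemma cochains_diff: "f \<in> cochains B \<Longrightarrow> g \<in> cochains B \<Longrightarrow> (\<lambda>t. f t - g t) \<in> cochains B"
  by (rule cochains_pointwise[of f B g]) simp_all

lemma cochains_mono: "f \<in> cochains B \<Longrightarrow> B \<subseteq> C \<Longrightarrow> f \<in> cochains C"
  unfolding cochains_def by auto

lemma bas_cochains: "\<sigma> \<subseteq> B \<Longrightarrow> bas \<sigma> \<in> cochains B"
  unfolding cochains_def bas_def by auto

lemma cochains_lincomb:
  assumes "\<And>g. g \<in> S \<Longrightarrow> F g \<in> cochains B"
  shows "(\<lambda>t. \<Sum>g\<in>S. c g * F g t) \<in> cochains B"
  unfolding cochains_def
proof (intro CollectI allI impI)
  fix \<sigma> assume "(\<Sum>g\<in>S. c g * F g \<sigma>) \<noteq> 0"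
  then obtain g where "g \<in> S" "c g * F g \<sigma> \<noteq> 0" by (rule sum.not_neutral_contains_not_neutral)
  then show "\<sigma> \<subseteq> B" using assms[of g] unfolding cochains_def by auto
qed

lemma qspan_zero: "(\<lambda>t. 0) \<in> qspan G"
  unfolding qspan_def by (intro CollectI exI[of _ "{}"]) auto

lemma qspan_gen: "g \<in> G \<Longrightarrow> g \<in> qspan G"
  unfolding qspan_def by (intro CollectI exI[of _ "{g}"] exI[of _ "\<lambda>_. 1"]) auto

lemma qspan_add:
  assumes "f \<in> qspan G" "g \<in> qspan G"
  shows "(\<lambda>t. f t + g t) \<in> qspan G"
proof -
  obtain S c where S: "finite S" "S \<subseteq> G" "f = (\<lambda>t. \<Sum>h\<in>S. c h * h t)"
    using assms(1) unfolding qspan_def by blast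
  obtain S' c' where S': "finite S'" "S' \<subseteq> G" "g = (\<lambda>t. \<Sum>h\<in>S'. c' h * h t)"
    using assms(2) unfolding qspan_def by blast
  define c'' where "c'' h = (if h \<in> S then c h else 0) + (if h \<in> S' then c' h else 0)" for h
  have "f t + g t = (\<Sum>h\<in>S \<union> S'. c'' h * h t)" for t
  proof -
    have "c'' h * h t = (if h \<in> S then c h * h t else 0) + (if h \<in> S' then c' h * h t else 0)" for h
      unfolding c''_def by (simp add: distrib_right)
    then have "(\<Sum>h\<in>S \<union> S'. c'' h * h t)
        = (\<Sum>h\<in>S \<union> S'. if h \<in> S then c h * h t else 0) + (\<Sum>h\<in>S \<union> S'. if h \<in> S' then c' h * h t else 0)"
      by (simp add: sum.distrib)
    also have "\<dots> = (\<Sum>h\<in>S. c h * h t) + (\<Sum>h\<in>S'. c' h * h t)"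
      using S S' by (simp add: sum.If_cases Int_absorb1 Int_absorb2)
    finally show ?thesis using S S' by simp
  qed
  then show ?thesis unfolding qspan_def
    by (intro CollectI exI[of _ "S \<union> S'"] exI[of _ c'']) (use S S' in auto)
qed

lemma qspan_scale:
  assumes "f \<in> qspan G"
  shows "(\<lambda>t. a * f t) \<in> qspan G"
proof -
  obtain S c where S: "finite S" "S \<subseteq> G" "f = (\<lambda>t. \<Sum>h\<in>S. c h * h t)"
    using assms unfolding qspan_def by blast
  then have "(\<lambda>t. a * f t) = (\<lambda>t. \<Sum>h\<in>S. (a * c h) * h t)"
    by (simp add: sum_distrib_left mult.assoc)
  then show ?thesis unfolding qspan_def
    by (intro CollectI exI[of _ S] exI[of _ "\<lambda>h. a * c h"]) (use S in auto)
qed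

lemma qspan_lincomb:
  "finite I \<Longrightarrow> (\<And>i. i \<in> I \<Longrightarrow> F i \<in> qspan G) \<Longrightarrow> (\<lambda>t. \<Sum>i\<in>I. c i * F i t) \<in> qspan G"
proof (induction I rule: finite_induct)
  case empty
  then show ?case using qspan_zero by simp
next
  case (insert i I)
  then have "(\<lambda>t. c i * F i t + (\<Sum>j\<in>I. c j * F j t)) \<in> qspan G"
    by (intro qspan_add qspan_scale) auto
  then show ?case using insert.hyps by simp
qed

lemma qspan_cochains:
  assumes "\<And>g. g \<in> G \<Longrightarrow> g \<in> cochains B" and "f \<in> qspan G"
  shows "f \<in> cochains B"
proof -
  obtain S c where "S \<subseteq> G" "f = (\<lambda>t. \<Sum>g\<in>S. c g * g t)" using assms(2) unfolding qspan_def by blast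
  then show ?thesis using assms(1) cochains_lincomb[of S id B c] by auto
qed

definition lin_map :: "'a set \<Rightarrow> ('a set \<Rightarrow> 'a set \<Rightarrow> rat) \<Rightarrow> ('a set \<Rightarrow> rat) \<Rightarrow> 'a set \<Rightarrow> rat" where
  "lin_map C M f = (\<lambda>\<tau>. \<Sum>\<sigma>\<in>Pow C. f \<sigma> * M \<sigma> \<tau>)"

lemma dcx_eq_lin_map: "dcx xs = lin_map (set xs) (dbas xs)"
  unfolding dcx_def lin_map_def by (rule ext) simp

lemma bas_mult: "bas \<sigma> \<rho> * a = (if \<rho> = \<sigma> then a else 0)"
  unfolding bas_def by simp

lemma mult_bas: "a * bas \<sigma> \<rho> = (if \<sigma> = \<rho> then a else 0)"
  unfolding bas_def by auto

lemma lin_map_scaled_bas: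
  "finite C \<Longrightarrow> \<sigma> \<subseteq> C \<Longrightarrow> lin_map C M (\<lambda>t. a * bas \<sigma> t) = (\<lambda>\<tau>. a * M \<sigma> \<tau>)"
  unfolding lin_map_def by (rule ext) (simp add: mult.assoc bas_mult sum_distrib_left[symmetric])

lemma lin_map_bas: "finite C \<Longrightarrow> \<sigma> \<subseteq> C \<Longrightarrow> lin_map C M (bas \<sigma>) = M \<sigma>"
  using lin_map_scaled_bas[of C \<sigma> M 1] by simp

lemma lin_map_bas_expansion: "finite C \<Longrightarrow> f \<in> cochains C \<Longrightarrow> lin_map C bas f = f"
  unfolding lin_map_def cochains_def by (rule ext) (auto simp: mult_bas)

lemma lin_map_comp: "lin_map C M (lin_map C N f) = lin_map C (\<lambda>\<sigma>. lin_map C M (N \<sigma>)) f"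
proof (rule ext)
  fix \<tau>
  have "lin_map C M (lin_map C N f) \<tau> = (\<Sum>\<rho>\<in>Pow C. \<Sum>\<sigma>\<in>Pow C. f \<sigma> * N \<sigma> \<rho> * M \<rho> \<tau>)"
    unfolding lin_map_def by (simp add: sum_distrib_right)
  also have "\<dots> = (\<Sum>\<sigma>\<in>Pow C. \<Sum>\<rho>\<in>Pow C. f \<sigma> * N \<sigma> \<rho> * M \<rho> \<tau>)"
    by (rule sum.swap)
  also have "\<dots> = lin_map C (\<lambda>\<sigma>. lin_map C M (N \<sigma>)) f \<tau>"
    unfolding lin_map_def by (simp add: sum_distrib_left mult.assoc)
  finally show "lin_map C M (lin_map C N f) \<tau> = lin_map C (\<lambda>\<sigma>. lin_map C M (N \<sigma>)) f \<tau>" .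
qed

lemma lin_map_zero: "lin_map C M (\<lambda>t. 0) = (\<lambda>t. 0)"
  unfolding lin_map_def by simp

lemma lin_map_add: "lin_map C M (\<lambda>t. f t + g t) = (\<lambda>t. lin_map C M f t + lin_map C M g t)"
  unfolding lin_map_def by (rule ext) (simp add: distrib_right sum.distrib)

lemma lin_map_diff: "lin_map C M (\<lambda>t. f t - g t) = (\<lambda>t. lin_map C M f t - lin_map C M g t)"
  unfolding lin_map_def by (rule ext) (simp add: left_diff_distrib sum_subtractf)

lemma lin_map_lincomb:
  "lin_map C M (\<lambda>t. \<Sum>g\<in>S. c g * g t) = (\<lambda>\<tau>. \<Sum>g\<in>S. c g * lin_map C M g \<tau>)"
proof (rule ext)
  fix \<tau>
  have "lin_map C M (\<lambda>t. \<Sum>g\<in>S. c g * g t) \<tau> = (\<Sum>\<sigma>\<in>Pow C. \<Sum>g\<in>S. c g * g \<sigma> * M \<sigma> \<tau>)"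
    unfolding lin_map_def by (simp add: sum_distrib_right)
  also have "\<dots> = (\<Sum>g\<in>S. \<Sum>\<sigma>\<in>Pow C. c g * g \<sigma> * M \<sigma> \<tau>)"
    by (rule sum.swap)
  also have "\<dots> = (\<Sum>g\<in>S. c g * lin_map C M g \<tau>)"
    unfolding lin_map_def by (simp add: sum_distrib_left mult.assoc)
  finally show "lin_map C M (\<lambda>t. \<Sum>g\<in>S. c g * g t) \<tau> = (\<Sum>g\<in>S. c g * lin_map C M g \<tau>)" .
qed

lemma lin_map_matrix_diff:
  "lin_map C (\<lambda>\<sigma> t. M \<sigma> t - N \<sigma> t) f = (\<lambda>t. lin_map C M f t - lin_map C N f t)"
  unfolding lin_map_def by (rule ext) (simp add: right_diff_distrib sum_subtractf)

lemma lin_map_cong: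
  "(\<And>\<sigma>. \<sigma> \<subseteq> C \<Longrightarrow> f \<sigma> \<noteq> 0 \<Longrightarrow> M \<sigma> = N \<sigma>) \<Longrightarrow> lin_map C M f = lin_map C N f"
  unfolding lin_map_def by (intro ext sum.cong refl) (metis PowD mult_zero_left)

lemma lin_map_zero_matrix:
  "(\<And>\<sigma>. \<sigma> \<subseteq> C \<Longrightarrow> f \<sigma> \<noteq> 0 \<Longrightarrow> M \<sigma> = (\<lambda>t. 0)) \<Longrightarrow> lin_map C M f = (\<lambda>t. 0)"
  using lin_map_cong[of C f M "\<lambda>_ t. 0"] by (simp add: lin_map_def)

lemma lin_map_cochains:
  assumes "\<And>\<sigma>. \<sigma> \<subseteq> C \<Longrightarrow> f \<sigma> \<noteq> 0 \<Longrightarrow> M \<sigma> \<in> cochains B"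
  shows "lin_map C M f \<in> cochains B"
  unfolding cochains_def
proof (intro CollectI allI impI)
  fix \<tau> assume "lin_map C M f \<tau> \<noteq> 0"
  then obtain \<sigma> where "\<sigma> \<in> Pow C" "f \<sigma> * M \<sigma> \<tau> \<noteq> 0"
    unfolding lin_map_def by (meson sum.not_neutral_contains_not_neutral)
  then show "\<tau> \<subseteq> B" using assms[of \<sigma>] unfolding cochains_def by auto
qed

lemma lin_map_qspan:
  assumes "finite C" and "\<And>\<sigma>. \<sigma> \<subseteq> C \<Longrightarrow> f \<sigma> \<noteq> 0 \<Longrightarrow> M \<sigma> \<in> qspan G"
  shows "lin_map C M f \<in> qspan G"
proof -
  have "lin_map C M f = lin_map C (\<lambda>\<sigma>. if f \<sigma> = 0 then (\<lambda>t. 0) else M \<sigma>) f"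
    by (rule lin_map_cong) auto
  also have "\<dots> \<in> qspan G" unfolding lin_map_def
    by (rule qspan_lincomb) (auto intro: assms(2) qspan_zero simp: assms(1))
  finally show ?thesis .
qed

section \<open>The differential squares to zero\<close>

definition face_sign :: "'a list \<Rightarrow> 'a set \<Rightarrow> 'a \<Rightarrow> rat" where
  "face_sign xs \<sigma> x = (-1) ^ (pos xs \<sigma> x + 1)"

definition removable :: "'v set set \<Rightarrow> 'v set \<Rightarrow> bool" where
  "removable \<sigma> x \<longleftrightarrow> \<Inter>(\<sigma> - {x}) = \<Inter>\<sigma>"

lemma dbas_eq:
  "dbas xs \<sigma> \<tau> = (\<Sum>x\<in>\<sigma>. if \<tau> = \<sigma> - {x} \<and> removable \<sigma> x then face_sign xs \<sigma> x else 0)"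
  unfolding dbas_def face_sign_def removable_def by simp

lemma dbas_cochains: "dbas xs \<sigma> \<in> cochains \<sigma>"
  unfolding cochains_def
proof (intro CollectI allI impI)
  fix \<tau> assume "dbas xs \<sigma> \<tau> \<noteq> 0"
  then obtain x where "x \<in> \<sigma>" "(if \<tau> = \<sigma> - {x} \<and> removable \<sigma> x then face_sign xs \<sigma> x else 0) \<noteq> 0"
    unfolding dbas_eq by (rule sum.not_neutral_contains_not_neutral)
  then show "\<tau> \<subseteq> \<sigma>" by (auto split: if_splits)
qed

lemma dcx_cochains_mono:
  assumes "f \<in> cochains B"
  shows "dcx xs f \<in> cochains B"
  unfolding dcx_eq_lin_map
proof (rule lin_map_cochains)
  fix \<sigma> assume "f \<sigma> \<noteq> 0"
  then have "\<sigma> \<subseteq> B" using assms unfolding cochains_def by blast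
  then show "dbas xs \<sigma> \<in> cochains B" using dbas_cochains cochains_mono by blast
qed

lemma dcx_cochains: "dcx xs f \<in> cochains (set xs)"
  unfolding dcx_eq_lin_map
  by (rule lin_map_cochains) (use dbas_cochains cochains_mono in blast)

lemma dcx_zero: "dcx xs (\<lambda>t. 0) = (\<lambda>t. 0)"
  unfolding dcx_eq_lin_map by (rule lin_map_zero)

lemma dcx_add: "dcx xs (\<lambda>t. f t + g t) = (\<lambda>t. dcx xs f t + dcx xs g t)"
  unfolding dcx_eq_lin_map by (rule lin_map_add)

lemma dcx_diff: "dcx xs (\<lambda>t. f t - g t) = (\<lambda>t. dcx xs f t - dcx xs g t)"
  unfolding dcx_eq_lin_map by (rule lin_map_diff)

lemma sum_dbas_mult:
  assumes "\<sigma> \<subseteq> set xs"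
  shows "(\<Sum>\<rho>\<in>Pow (set xs). dbas xs \<sigma> \<rho> * G \<rho>)
       = (\<Sum>x\<in>\<sigma>. if removable \<sigma> x then face_sign xs \<sigma> x * G (\<sigma> - {x}) else 0)"
proof -
  have "(\<Sum>\<rho>\<in>Pow (set xs). dbas xs \<sigma> \<rho> * G \<rho>)
      = (\<Sum>\<rho>\<in>Pow (set xs). \<Sum>x\<in>\<sigma>. if \<rho> = \<sigma> - {x} then
           (if removable \<sigma> x then face_sign xs \<sigma> x * G \<rho> else 0) else 0)"
    unfolding dbas_eq sum_distrib_right by (intro sum.cong refl) simp
  also have "\<dots> = (\<Sum>x\<in>\<sigma>. \<Sum>\<rho>\<in>Pow (set xs). if \<rho> = \<sigma> - {x} then
           (if removable \<sigma> x then face_sign xs \<sigma> x * G \<rho> else 0) else 0)"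
    by (rule sum.swap)
  also have "\<dots> = (\<Sum>x\<in>\<sigma>. if removable \<sigma> x then face_sign xs \<sigma> x * G (\<sigma> - {x}) else 0)"
    using assms by (intro sum.cong refl) (auto simp: sum.delta)
  finally show ?thesis .
qed

lemma removable_swap:
  assumes "removable \<sigma> x" "removable (\<sigma> - {x}) y"
  shows "removable \<sigma> y \<and> removable (\<sigma> - {y}) x"
proof -
  have joins: "\<Inter>(\<sigma> - {x} - {y}) = \<Inter>\<sigma>" using assms unfolding removable_def by simp
  have "\<Inter>\<sigma> \<subseteq> \<Inter>(\<sigma> - {y})" "\<Inter>(\<sigma> - {y}) \<subseteq> \<Inter>(\<sigma> - {x} - {y})"
    by (auto intro: Inter_anti_mono)
  then have "\<Inter>(\<sigma> - {y}) = \<Inter>\<sigma>" using joins by auto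
  moreover have "\<sigma> - {y} - {x} = \<sigma> - {x} - {y}" by auto
  ultimately show ?thesis unfolding removable_def using joins by simp
qed

lemma pos_insert:
  "finite \<sigma> \<Longrightarrow> a \<notin> \<sigma> \<Longrightarrow> pos xs (insert a \<sigma>) x = pos xs \<sigma> x + (if before xs a x then 1 else 0)"
proof -
  assume "finite \<sigma>" "a \<notin> \<sigma>"
  moreover have "{y \<in> insert a \<sigma>. before xs y x}
      = (if before xs a x then insert a {y \<in> \<sigma>. before xs y x} else {y \<in> \<sigma>. before xs y x})"
    by auto
  ultimately show ?thesis unfolding pos_def by auto
qed

lemma pos_remove:
  "finite \<sigma> \<Longrightarrow> x \<in> \<sigma> \<Longrightarrow> pos xs \<sigma> y = pos xs (\<sigma> - {x}) y + (if before xs x y then 1 else 0)"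
  using pos_insert[of "\<sigma> - {x}" x xs y] by (simp add: insert_absorb)

lemma sum_antisym:
  fixes F :: "'a \<Rightarrow> 'a \<Rightarrow> 'b::linordered_ab_group_add"
  assumes "finite S" "\<And>x y. x \<in> S \<Longrightarrow> y \<in> S \<Longrightarrow> x \<noteq> y \<Longrightarrow> F x y = - F y x"
  shows "(\<Sum>x\<in>S. \<Sum>y\<in>S - {x}. F x y) = 0"
proof -
  define D where "D = Sigma S (\<lambda>x. S - {x})"
  have sum_D: "(\<Sum>x\<in>S. \<Sum>y\<in>S - {x}. F x y) = (\<Sum>(x, y)\<in>D. F x y)"
    unfolding D_def by (rule sum.Sigma) (use assms(1) in auto)
  have "(\<Sum>(x, y)\<in>D. F x y) = (\<Sum>(x, y)\<in>D. F y x)"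
    by (rule sum.reindex_bij_witness[of _ prod.swap prod.swap]) (auto simp: D_def)
  also have "\<dots> = (\<Sum>(x, y)\<in>D. - F x y)"
  proof (rule sum.cong[OF refl], clarify)
    fix x y assume "(x, y) \<in> D"
    then show "F y x = - F x y" using assms(2)[of y x] unfolding D_def by auto
  qed
  also have "\<dots> = - (\<Sum>(x, y)\<in>D. F x y)"
    by (simp add: sum_negf[symmetric] case_prod_beta)
  finally show ?thesis using sum_D by (simp add: equal_neg_zero)
qed

locale list_order =
  fixes xs :: "'a list"
  assumes distinct: "distinct xs"
begin

lemma before_nth_iff: "i < length xs \<Longrightarrow> j < length xs \<Longrightarrow> before xs (xs ! i) (xs ! j) \<longleftrightarrow> i < j"
  unfolding before_def using distinct nth_eq_iff_index_eq by (metis order.strict_trans)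

lemma before_in_set: "before xs y x \<Longrightarrow> y \<in> set xs \<and> x \<in> set xs"
  unfolding before_def by auto

lemma before_irrefl: "\<not> before xs x x"
  unfolding before_def using distinct nth_eq_iff_index_eq by (metis order_less_irrefl order.strict_trans)

lemma before_asym: "before xs x y \<Longrightarrow> \<not> before xs y x"
  unfolding before_def using distinct nth_eq_iff_index_eq by (metis order.strict_trans order_less_asym)

lemma before_trans: "before xs x y \<Longrightarrow> before xs y z \<Longrightarrow> before xs x z"
  unfolding before_def using distinct nth_eq_iff_index_eq by (metis order.strict_trans)

lemma before_total: "x \<in> set xs \<Longrightarrow> y \<in> set xs \<Longrightarrow> x \<noteq> y \<Longrightarrow> before xs x y \<or> before xs y x"
  unfolding before_def by (metis in_set_conv_nth linorder_neqE_nat)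

lemma face_sign_swap:
  assumes "finite \<sigma>" "x \<in> \<sigma>" "y \<in> \<sigma>" "x \<noteq> y" "x \<in> set xs" "y \<in> set xs"
  shows "face_sign xs \<sigma> x * face_sign xs (\<sigma> - {x}) y = - (face_sign xs \<sigma> y * face_sign xs (\<sigma> - {y}) x)"
proof -
  have ordered: "face_sign xs \<sigma> x * face_sign xs (\<sigma> - {x}) y = - (face_sign xs \<sigma> y * face_sign xs (\<sigma> - {y}) x)"
    if "before xs y x" "x \<in> \<sigma>" "y \<in> \<sigma>" for x y
  proof -
    have "pos xs \<sigma> y = pos xs (\<sigma> - {x}) y"
      using pos_remove[OF assms(1) \<open>x \<in> \<sigma>\<close>, of xs y] before_asym[OF \<open>before xs y x\<close>] by simp
    moreover have "pos xs \<sigma> x = pos xs (\<sigma> - {y}) x + 1"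
      using pos_remove[OF assms(1) \<open>y \<in> \<sigma>\<close>, of xs x] \<open>before xs y x\<close> by simp
    ultimately show ?thesis unfolding face_sign_def by (simp add: power_add)
  qed
  show ?thesis
    using before_total[OF assms(5,6,4)] ordered[of x y] ordered[of y x] assms by (auto simp: algebra_simps)
qed

lemma face_sign_insert_remove:
  assumes "finite \<sigma>" "b \<notin> \<sigma>" "x \<in> \<sigma>" "b \<in> set xs" "x \<in> set xs"
  shows "face_sign xs \<sigma> b * face_sign xs (insert b \<sigma>) x + face_sign xs \<sigma> x * face_sign xs (\<sigma> - {x}) b = 0"
proof -
  have "x \<noteq> b" using assms by auto
  have "pos xs (insert b \<sigma>) x = pos xs \<sigma> x + (if before xs b x then 1 else 0)"
    by (rule pos_insert[OF assms(1,2)])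
  moreover have "pos xs \<sigma> b = pos xs (\<sigma> - {x}) b + (if before xs x b then 1 else 0)"
    by (rule pos_remove[OF assms(1,3)])
  moreover have "before xs b x \<longleftrightarrow> \<not> before xs x b"
    using before_total[OF assms(4,5)] before_asym \<open>x \<noteq> b\<close> by blast
  ultimately show ?thesis unfolding face_sign_def by (cases "before xs b x") (simp_all add: power_add)
qed

end

lemma dbas_dbas:
  assumes "distinct xs" "\<sigma> \<subseteq> set xs"
  shows "(\<Sum>\<rho>\<in>Pow (set xs). dbas xs \<sigma> \<rho> * dbas xs \<rho> \<tau>) = 0"
proof -
  interpret list_order xs by (rule list_order.intro) (fact assms(1))
  have fin: "finite \<sigma>" using assms(2) rev_finite_subset by blast
  define F where "F x y = (if removable \<sigma> x \<and> removable (\<sigma> - {x}) y \<and> \<tau> = \<sigma> - {x} - {y}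
    then face_sign xs \<sigma> x * face_sign xs (\<sigma> - {x}) y else 0)" for x y
  have "(\<Sum>\<rho>\<in>Pow (set xs). dbas xs \<sigma> \<rho> * dbas xs \<rho> \<tau>)
      = (\<Sum>x\<in>\<sigma>. if removable \<sigma> x then face_sign xs \<sigma> x * dbas xs (\<sigma> - {x}) \<tau> else 0)"
    by (rule sum_dbas_mult[OF assms(2)])
  also have "\<dots> = (\<Sum>x\<in>\<sigma>. \<Sum>y\<in>\<sigma> - {x}. F x y)"
  proof (rule sum.cong[OF refl])
    fix x assume "x \<in> \<sigma>"
    show "(if removable \<sigma> x then face_sign xs \<sigma> x * dbas xs (\<sigma> - {x}) \<tau> else 0) = (\<Sum>y\<in>\<sigma> - {x}. F x y)"
      unfolding dbas_eq F_def sum_distrib_left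
      by (cases "removable \<sigma> x") (simp_all, intro sum.cong refl, auto)
  qed
  also have "\<dots> = 0"
  proof (rule sum_antisym[OF fin])
    fix x y assume xy: "x \<in> \<sigma>" "y \<in> \<sigma>" "x \<noteq> y"
    have eq: "\<sigma> - {x} - {y} = \<sigma> - {y} - {x}" by auto
    have c: "removable \<sigma> x \<and> removable (\<sigma> - {x}) y \<longleftrightarrow> removable \<sigma> y \<and> removable (\<sigma> - {y}) x"
      using removable_swap by blast
    have signs: "face_sign xs \<sigma> x * face_sign xs (\<sigma> - {x}) y = - (face_sign xs \<sigma> y * face_sign xs (\<sigma> - {y}) x)"
      using face_sign_swap[OF fin xy] xy assms(2) by auto
    show "F x y = - F y x"
    proof (cases "removable \<sigma> x \<and> removable (\<sigma> - {x}) y \<and> \<tau> = \<sigma> - {x} - {y}")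
      case True
      then have "removable \<sigma> y \<and> removable (\<sigma> - {y}) x \<and> \<tau> = \<sigma> - {y} - {x}" using c eq by simp
      then show ?thesis using True signs unfolding F_def by simp
    next
      case False
      then have "\<not> (removable \<sigma> y \<and> removable (\<sigma> - {y}) x \<and> \<tau> = \<sigma> - {y} - {x})"
        using c unfolding eq by blast
      then have "F y x = 0" unfolding F_def by (rule if_not_P)
      moreover have "F x y = 0" unfolding F_def by (rule if_not_P[OF False])
      ultimately show ?thesis by simp
    qed
  qed
  finally show ?thesis .
qed

lemma dcx_dcx: "distinct xs \<Longrightarrow> dcx xs (dcx xs f) = (\<lambda>t. 0)"
  unfolding dcx_eq_lin_map lin_map_comp
  by (rule lin_map_zero_matrix) (simp add: lin_map_def dbas_dbas)

section \<open>Contracting a class onto its first element\<close>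

fun opt_bas :: "'a set option \<Rightarrow> 'a set \<Rightarrow> rat" where
  "opt_bas None = (\<lambda>_. 0)"
| "opt_bas (Some \<sigma>) = bas \<sigma>"

locale class_ordered_arrangement = list_order xs for xs :: "'v set list" +
  assumes nonempty: "xs \<noteq> []"
    and classes_contiguous: "\<forall>i j k. 1 \<le> i \<and> i < j \<and> j < k \<and> k < length xs \<and>
           hd xs \<inter> xs ! i = hd xs \<inter> xs ! k \<longrightarrow> hd xs \<inter> xs ! j = hd xs \<inter> xs ! i"
begin

abbreviation "x0 \<equiv> hd xs"
abbreviation "A \<equiv> set xs"
abbreviation "A' \<equiv> set (tl xs)"

lemma A_eq: "A = insert x0 A'"
  using nonempty by (cases xs) auto

lemma x0_notin_A': "x0 \<notin> A'"
  using nonempty distinct by (cases xs) auto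

lemma mem_A'_iff_nth: "y \<in> A' \<longleftrightarrow> (\<exists>j. 1 \<le> j \<and> j < length xs \<and> y = xs ! j)"
proof
  assume "y \<in> A'"
  then obtain i where "i < length (tl xs)" "y = tl xs ! i" by (metis in_set_conv_nth)
  then show "\<exists>j. 1 \<le> j \<and> j < length xs \<and> y = xs ! j"
    using nonempty by (intro exI[of _ "Suc i"]) (auto simp: nth_tl)
next
  assume "\<exists>j. 1 \<le> j \<and> j < length xs \<and> y = xs ! j"
  then obtain j where "1 \<le> j" "j < length xs" "y = xs ! j" by blast
  then have "y = tl xs ! (j - 1)" "j - 1 < length (tl xs)" by (auto simp: nth_tl)
  then show "y \<in> A'" by (metis nth_mem)
qed

lemma same_class_between:
  assumes "a \<in> A'" "x \<in> A'" "x0 \<inter> a = x0 \<inter> x" "before xs a z" "before xs z x"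
  shows "z \<in> A' \<and> x0 \<inter> z = x0 \<inter> a"
proof -
  obtain i where i: "1 \<le> i" "i < length xs" "a = xs ! i" using assms(1) mem_A'_iff_nth by blast
  obtain k where k: "1 \<le> k" "k < length xs" "x = xs ! k" using assms(2) mem_A'_iff_nth by blast
  obtain j where j: "j < length xs" "z = xs ! j"
    using before_in_set assms(4) by (metis in_set_conv_nth)
  have "i < j" "j < k" using before_nth_iff i j k assms(4,5) by simp_all
  then have "x0 \<inter> z = x0 \<inter> a" using classes_contiguous i j k assms(3) by blast
  moreover have "z \<in> A'" unfolding mem_A'_iff_nth using i j \<open>i < j\<close> by (intro exI[of _ j]) auto
  ultimately show ?thesis by blast
qed

definition class_part :: "'v set \<Rightarrow> 'v set set \<Rightarrow> 'v set set" where
  "class_part b \<sigma> = {y \<in> \<sigma>. y \<noteq> x0 \<and> x0 \<inter> y = x0 \<inter> b}"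

definition class_leader :: "'v set \<Rightarrow> bool" where
  "class_leader b \<longleftrightarrow> b \<in> A' \<and> (\<forall>y\<in>A'. x0 \<inter> y = x0 \<inter> b \<longrightarrow> \<not> before xs y b)"

text \<open>\<open>contraction b\<close> and \<open>homotopy b\<close> are the operators \<open>E_b\<close> and \<open>h_b\<close>;
  \<open>None\<close> stands for the zero cochain.\<close>

definition contract :: "'v set \<Rightarrow> 'v set set \<Rightarrow> 'v set set option" where
  "contract b \<sigma> = (if x0 \<notin> \<sigma> then None else if class_part b \<sigma> = {} then Some \<sigma>
     else if card (class_part b \<sigma>) = 1 then Some (insert b (\<sigma> - class_part b \<sigma>)) else None)"

definition contraction :: "'v set \<Rightarrow> ('v set set \<Rightarrow> rat) \<Rightarrow> 'v set set \<Rightarrow> rat" where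
  "contraction b = lin_map A (\<lambda>\<sigma>. opt_bas (contract b \<sigma>))"

definition homotopy_bas :: "'v set \<Rightarrow> 'v set set \<Rightarrow> 'v set set \<Rightarrow> rat" where
  "homotopy_bas b \<sigma> = (if x0 \<in> \<sigma> \<and> b \<notin> \<sigma> \<and> class_part b \<sigma> \<noteq> {}
     then (\<lambda>t. face_sign xs \<sigma> b * bas (insert b \<sigma>) t) else (\<lambda>t. 0))"

definition homotopy :: "'v set \<Rightarrow> ('v set set \<Rightarrow> rat) \<Rightarrow> 'v set set \<Rightarrow> rat" where
  "homotopy b = lin_map A (homotopy_bas b)"

lemma class_leaderD: "class_leader b \<Longrightarrow> b \<in> A' \<and> b \<in> A \<and> b \<noteq> x0"
  unfolding class_leader_def using A_eq x0_notin_A' by auto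

lemma class_leader_before:
  assumes "class_leader b" "x \<in> A'" "x0 \<inter> x = x0 \<inter> b" "x \<noteq> b"
  shows "before xs b x"
  using assms before_total class_leaderD A_eq unfolding class_leader_def by blast

lemma class_leader_exists:
  assumes "u \<in> A'"
  shows "\<exists>b. class_leader b \<and> x0 \<inter> b = x0 \<inter> u"
proof -
  define I where "I = {i. 1 \<le> i \<and> i < length xs \<and> x0 \<inter> xs ! i = x0 \<inter> u}"
  obtain j where "1 \<le> j" "j < length xs" "u = xs ! j" using assms mem_A'_iff_nth by blast
  then have "j \<in> I" unfolding I_def by auto
  moreover have "finite I" unfolding I_def by auto
  ultimately have "Min I \<in> I" using Min_in by blast
  then have m: "1 \<le> Min I" "Min I < length xs" "x0 \<inter> xs ! Min I = x0 \<inter> u"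
    unfolding I_def by auto
  have "class_leader (xs ! Min I)" unfolding class_leader_def
  proof (intro conjI ballI impI)
    show "xs ! Min I \<in> A'" unfolding mem_A'_iff_nth using m by blast
  next
    fix y assume y: "y \<in> A'" "x0 \<inter> y = x0 \<inter> xs ! Min I"
    obtain k where k: "1 \<le> k" "k < length xs" "y = xs ! k" using y(1) mem_A'_iff_nth by blast
    then have "k \<in> I" unfolding I_def using y(2) m(3) by auto
    then have "Min I \<le> k" using \<open>finite I\<close> by simp
    then show "\<not> before xs y (xs ! Min I)" using before_nth_iff[OF k(2) m(2)] k(3) by simp
  qed
  then show ?thesis using m(3) by blast
qed

lemma class_leaders_list: "\<exists>bs. set bs = Collect class_leader"
  using finite_list[of "Collect class_leader"] class_leaderD
    finite_subset[of "Collect class_leader" A'] by auto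

lemma removable_if_class_mate:
  assumes "x0 \<in> \<sigma>" "y \<in> \<sigma>" "y \<noteq> x" "x \<noteq> x0" "x0 \<inter> y = x0 \<inter> x"
  shows "removable \<sigma> x"
proof -
  have "\<Inter>(\<sigma> - {x}) \<subseteq> x" using assms by auto
  moreover have "\<Inter>\<sigma> \<subseteq> \<Inter>(\<sigma> - {x})" by (rule Inter_anti_mono) auto
  moreover have "\<Inter>(\<sigma> - {x}) \<inter> x \<subseteq> \<Inter>\<sigma>" by auto
  ultimately show ?thesis unfolding removable_def by blast
qed

lemma removable_insert_class_mate_iff:
  assumes "x0 \<in> \<sigma>" "y \<in> \<sigma>" "y \<noteq> x" "x \<noteq> x0" "x0 \<inter> y = x0 \<inter> b" "x \<noteq> b"
  shows "removable (insert b \<sigma>) x \<longleftrightarrow> removable \<sigma> x"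
proof -
  have "\<Inter>(\<sigma> - {x}) \<subseteq> b" "\<Inter>\<sigma> \<subseteq> b" using assms by auto
  moreover have "insert b \<sigma> - {x} = insert b (\<sigma> - {x})" using assms(6) by auto
  ultimately have "\<Inter>(insert b \<sigma> - {x}) = \<Inter>(\<sigma> - {x})" "\<Inter>(insert b \<sigma>) = \<Inter>\<sigma>" by auto
  then show ?thesis unfolding removable_def by simp
qed

text \<open>Contiguity of the classes enters only here: the unique class mate \<open>x\<close> of \<open>b\<close> in
  \<open>\<sigma>\<close> has the same position in \<open>\<sigma>\<close> as \<open>b\<close> would have.\<close>

lemma pos_class_mate:
  assumes "class_leader b" "b \<notin> \<sigma>" "\<sigma> \<subseteq> A" "class_part b \<sigma> = {x}"
  shows "pos xs \<sigma> x = pos xs \<sigma> b" and "before xs b x"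
proof -
  have x: "x \<in> \<sigma>" "x \<noteq> x0" "x0 \<inter> x = x0 \<inter> b" using assms(4) unfolding class_part_def by auto
  have xA': "x \<in> A'" using x assms(3) A_eq by auto
  have b: "b \<in> A'" "b \<in> A" using class_leaderD[OF assms(1)] by auto
  show bx: "before xs b x" using class_leader_before[OF assms(1) xA' x(3)] x(1) assms(2) by blast
  have "{y \<in> \<sigma>. before xs y x} = {y \<in> \<sigma>. before xs y b}"
  proof (intro Collect_cong conj_cong refl iffI)
    fix y assume y: "y \<in> \<sigma>" "before xs y x"
    show "before xs y b"
    proof (rule ccontr)
      assume "\<not> before xs y b"
      moreover have "y \<noteq> b" using y assms(2) by auto
      ultimately have "before xs b y" using before_total[of y b] y assms(3) b by auto
      then have "y \<in> A' \<and> x0 \<inter> y = x0 \<inter> b" using same_class_between[OF b(1) xA' _ _ y(2)] x(3) by auto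
      then have "y \<in> class_part b \<sigma>" using y x0_notin_A' unfolding class_part_def by auto
      then show False using assms(4) y(2) before_irrefl by auto
    qed
  next
    fix y assume "y \<in> \<sigma>" "before xs y b"
    then show "before xs y x" using before_trans bx by blast
  qed
  then show "pos xs \<sigma> x = pos xs \<sigma> b" unfolding pos_def by simp
qed

lemma contract_subset: "b \<in> A \<Longrightarrow> \<sigma> \<subseteq> A \<Longrightarrow> contract b \<sigma> = Some \<tau> \<Longrightarrow> \<tau> \<subseteq> A"
  unfolding contract_def by (auto split: if_splits)

lemma opt_bas_contract_cochains: "b \<in> A \<Longrightarrow> \<sigma> \<subseteq> A \<Longrightarrow> opt_bas (contract b \<sigma>) \<in> cochains A"
  using contract_subset[of b \<sigma>] by (cases "contract b \<sigma>") (auto intro: bas_cochains cochains_zero)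

lemma homotopy_cochains: "b \<in> A \<Longrightarrow> homotopy b f \<in> cochains A"
  unfolding homotopy_def
  by (rule lin_map_cochains) (auto simp: homotopy_bas_def cochains_def bas_def)

lemma contraction_A'_zero:
  assumes "f \<in> cochains A'"
  shows "contraction b f = (\<lambda>t. 0)"
  unfolding contraction_def
proof (rule lin_map_zero_matrix)
  fix \<sigma> assume "f \<sigma> \<noteq> 0"
  then have "x0 \<notin> \<sigma>" using assms x0_notin_A' unfolding cochains_def by auto
  then show "opt_bas (contract b \<sigma>) = (\<lambda>t. 0)" unfolding contract_def by simp
qed

lemma homotopy_A'_zero:
  assumes "f \<in> cochains A'"
  shows "homotopy b f = (\<lambda>t. 0)"
  unfolding homotopy_def
proof (rule lin_map_zero_matrix)
  fix \<sigma> assume "f \<sigma> \<noteq> 0"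
  then have "x0 \<notin> \<sigma>" using assms x0_notin_A' unfolding cochains_def by auto
  then show "homotopy_bas b \<sigma> = (\<lambda>t. 0)" unfolding homotopy_bas_def by simp
qed

lemma contract_two_mates:
  assumes "finite \<sigma>" "u \<in> class_part b \<sigma>" "v \<in> class_part b \<sigma>" "u \<noteq> v"
  shows "contract b \<sigma> = None"
proof -
  have "finite (class_part b \<sigma>)" using assms(1) unfolding class_part_def by simp
  then have "card {u, v} \<le> card (class_part b \<sigma>)" using assms(2,3) by (intro card_mono) auto
  then show ?thesis using assms(2,4) unfolding contract_def by auto
qed

lemma dcx_homotopy_bas:
  assumes "\<sigma> \<subseteq> A" "b \<in> A"
  shows "dcx xs (homotopy_bas b \<sigma>) \<tau> = (if x0 \<in> \<sigma> \<and> b \<notin> \<sigma> \<and> class_part b \<sigma> \<noteq> {}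
    then face_sign xs \<sigma> b * dbas xs (insert b \<sigma>) \<tau> else 0)"
  unfolding dcx_eq_lin_map homotopy_bas_def
  using lin_map_scaled_bas[of A "insert b \<sigma>" "dbas xs" "face_sign xs \<sigma> b"] assms
  by (simp add: lin_map_zero)

lemma homotopy_dbas:
  assumes "\<sigma> \<subseteq> A"
  shows "homotopy b (dbas xs \<sigma>) \<tau>
    = (\<Sum>x\<in>\<sigma>. if removable \<sigma> x then face_sign xs \<sigma> x * homotopy_bas b (\<sigma> - {x}) \<tau> else 0)"
  unfolding homotopy_def lin_map_def using sum_dbas_mult[OF assms, of "\<lambda>\<rho>. homotopy_bas b \<rho> \<tau>"] by simp

text \<open>For \<open>b \<notin> \<sigma>\<close> the faces of \<open>d (h_b \<sigma>)\<close> and of \<open>h_b (d \<sigma>)\<close> cancel in pairs, indexed by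
  the removed element \<open>x\<close>, except when \<open>x\<close> is the only class mate of \<open>b\<close> in \<open>\<sigma>\<close>.\<close>

lemma homotopy_face_term:
  assumes r: "class_leader b" and s: "\<sigma> \<subseteq> A" "x0 \<in> \<sigma>" "b \<notin> \<sigma>" "class_part b \<sigma> \<noteq> {}"
    and x: "x \<in> \<sigma>" and t: "x0 \<in> \<tau>"
  shows "face_sign xs \<sigma> b * (if \<tau> = insert b \<sigma> - {x} \<and> removable (insert b \<sigma>) x
           then face_sign xs (insert b \<sigma>) x else 0)
       + (if removable \<sigma> x then face_sign xs \<sigma> x * homotopy_bas b (\<sigma> - {x}) \<tau> else 0)
       = (if class_part b \<sigma> = {x} then - bas (insert b (\<sigma> - {x})) \<tau> else 0)"
proof -
  have b: "b \<in> A'" "b \<in> A" "b \<noteq> x0" using class_leaderD[OF r] by auto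
  have fin: "finite \<sigma>" using s(1) rev_finite_subset by blast
  have xb: "x \<noteq> b" and xA: "x \<in> A" using x s by auto
  show ?thesis
  proof (cases "x = x0")
    case True
    then show ?thesis using t unfolding homotopy_bas_def class_part_def by auto
  next
    case xn: False
    have eins: "insert b \<sigma> - {x} = insert b (\<sigma> - {x})" using xb by auto
    show ?thesis
    proof (cases "class_part b (\<sigma> - {x}) = {}")
      case True
      then have xc: "class_part b \<sigma> = {x}" using s(4) unfolding class_part_def by auto
      then have "x0 \<inter> x = x0 \<inter> b" unfolding class_part_def by auto
      then have "removable (insert b \<sigma>) x"
        by (intro removable_if_class_mate[of _ b]) (use s xb xn in auto)
      moreover have "face_sign xs \<sigma> b * face_sign xs (insert b \<sigma>) x = -1"
      proof -
        have "pos xs \<sigma> x = pos xs \<sigma> b" "before xs b x" using pos_class_mate[OF r s(3) s(1) xc] by auto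
        moreover have "pos xs (insert b \<sigma>) x = pos xs \<sigma> x + 1"
          using pos_insert[OF fin s(3)] \<open>before xs b x\<close> by simp
        ultimately show ?thesis unfolding face_sign_def by (simp add: power_add)
      qed
      moreover have "homotopy_bas b (\<sigma> - {x}) = (\<lambda>t. 0)" using True unfolding homotopy_bas_def by auto
      ultimately show ?thesis using xc eins by (auto simp: bas_def)
    next
      case False
      then obtain y where y: "y \<in> \<sigma>" "y \<noteq> x" "y \<noteq> x0" "x0 \<inter> y = x0 \<inter> b"
        unfolding class_part_def by auto
      have "removable (insert b \<sigma>) x \<longleftrightarrow> removable \<sigma> x"
        by (rule removable_insert_class_mate_iff[OF s(2) y(1,2) xn y(4) xb])
      moreover have "class_part b \<sigma> \<noteq> {x}" using y unfolding class_part_def by auto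
      moreover have "homotopy_bas b (\<sigma> - {x}) \<tau> = face_sign xs (\<sigma> - {x}) b * bas (insert b (\<sigma> - {x})) \<tau>"
        using False s xn unfolding homotopy_bas_def by auto
      moreover have "face_sign xs \<sigma> b * face_sign xs (insert b \<sigma>) x + face_sign xs \<sigma> x * face_sign xs (\<sigma> - {x}) b = 0"
        by (rule face_sign_insert_remove[OF fin s(3) x b(2) xA])
      ultimately show ?thesis using eins by (auto simp: bas_def algebra_simps)
    qed
  qed
qed

lemma homotopy_identity_mem:
  assumes r: "class_leader b" and s: "\<sigma> \<subseteq> A" "x0 \<in> \<sigma>" "b \<in> \<sigma>"
  shows "bas \<sigma> \<tau> - opt_bas (contract b \<sigma>) \<tau> - dcx xs (homotopy_bas b \<sigma>) \<tau> - homotopy b (dbas xs \<sigma>) \<tau> = 0"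
proof -
  have b: "b \<in> A'" "b \<in> A" "b \<noteq> x0" using class_leaderD[OF r] by auto
  have fin: "finite \<sigma>" using s(1) rev_finite_subset by blast
  have ib: "insert b (\<sigma> - {b}) = \<sigma>" using s(3) by auto
  have d_h: "dcx xs (homotopy_bas b \<sigma>) \<tau> = 0" using dcx_homotopy_bas[OF s(1) b(2)] s(3) by simp
  have "homotopy_bas b (\<sigma> - {x}) = (\<lambda>t. 0)" if "x \<in> \<sigma> - {b}" for x
    using that s(3) unfolding homotopy_bas_def by auto
  then have "(\<Sum>x\<in>\<sigma> - {b}. if removable \<sigma> x then face_sign xs \<sigma> x * homotopy_bas b (\<sigma> - {x}) \<tau> else 0) = 0"
    by (intro sum.neutral) auto
  then have h_d: "homotopy b (dbas xs \<sigma>) \<tau>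
      = (if removable \<sigma> b then face_sign xs \<sigma> b * homotopy_bas b (\<sigma> - {b}) \<tau> else 0)"
    unfolding homotopy_dbas[OF s(1)] sum.remove[OF fin s(3)] by simp
  show ?thesis
  proof (cases "class_part b (\<sigma> - {b}) = {}")
    case True
    then have "class_part b \<sigma> = {b}" using s(3) b unfolding class_part_def by auto
    then have "contract b \<sigma> = Some \<sigma>" using s(2) ib unfolding contract_def by auto
    moreover have "homotopy_bas b (\<sigma> - {b}) = (\<lambda>t. 0)" using True unfolding homotopy_bas_def by auto
    ultimately show ?thesis using d_h h_d by simp
  next
    case False
    then obtain y where y: "y \<in> \<sigma>" "y \<noteq> b" "y \<noteq> x0" "x0 \<inter> y = x0 \<inter> b"
      unfolding class_part_def by auto
    have "removable \<sigma> b" by (rule removable_if_class_mate[OF s(2) y(1,2) b(3) y(4)])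
    moreover have "contract b \<sigma> = None"
      by (rule contract_two_mates[OF fin, of b b y]) (use y s(3) b in \<open>auto simp: class_part_def\<close>)
    moreover have "homotopy_bas b (\<sigma> - {b}) \<tau> = face_sign xs (\<sigma> - {b}) b * bas \<sigma> \<tau>"
      using False s(2) b(3) ib unfolding homotopy_bas_def by auto
    moreover have "face_sign xs \<sigma> b * face_sign xs (\<sigma> - {b}) b = 1"
      using pos_remove[OF fin s(3), of xs b] before_irrefl unfolding face_sign_def by (simp flip: power_add)
    ultimately show ?thesis using d_h h_d by (simp add: mult.assoc[symmetric])
  qed
qed

lemma dcx_homotopy_plus_homotopy_dcx_bas:
  assumes r: "class_leader b" and s: "\<sigma> \<subseteq> A" "x0 \<in> \<sigma>" "b \<notin> \<sigma>"
    and mates: "class_part b \<sigma> \<noteq> {}" and t: "x0 \<in> \<tau>"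
  shows "dcx xs (homotopy_bas b \<sigma>) \<tau> + homotopy b (dbas xs \<sigma>) \<tau>
    = bas \<sigma> \<tau> + (\<Sum>x\<in>\<sigma>. if class_part b \<sigma> = {x} then - bas (insert b (\<sigma> - {x})) \<tau> else 0)"
proof -
  have b: "b \<in> A'" "b \<in> A" "b \<noteq> x0" using class_leaderD[OF r] by auto
  have fin: "finite \<sigma>" using s(1) rev_finite_subset by blast
  obtain y where y: "y \<in> \<sigma>" "y \<noteq> x0" "x0 \<inter> y = x0 \<inter> b" using mates unfolding class_part_def by auto
  have "removable (insert b \<sigma>) b"
    by (rule removable_if_class_mate[of _ y]) (use s y b in auto)
  moreover have "face_sign xs \<sigma> b * face_sign xs (insert b \<sigma>) b = 1"
    using pos_insert[OF fin s(3), of xs b] before_irrefl unfolding face_sign_def by (simp flip: power_add)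
  moreover have "dbas xs (insert b \<sigma>) \<tau>
      = (if \<tau> = insert b \<sigma> - {b} \<and> removable (insert b \<sigma>) b then face_sign xs (insert b \<sigma>) b else 0)
      + (\<Sum>x\<in>\<sigma>. if \<tau> = insert b \<sigma> - {x} \<and> removable (insert b \<sigma>) x then face_sign xs (insert b \<sigma>) x else 0)"
    unfolding dbas_eq by (rule sum.insert[OF fin s(3)])
  moreover have "insert b \<sigma> - {b} = \<sigma>" using s(3) by auto
  ultimately have "dcx xs (homotopy_bas b \<sigma>) \<tau> + homotopy b (dbas xs \<sigma>) \<tau>
      = bas \<sigma> \<tau> + (\<Sum>x\<in>\<sigma>. face_sign xs \<sigma> b * (if \<tau> = insert b \<sigma> - {x} \<and> removable (insert b \<sigma>) x
           then face_sign xs (insert b \<sigma>) x else 0)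
        + (if removable \<sigma> x then face_sign xs \<sigma> x * homotopy_bas b (\<sigma> - {x}) \<tau> else 0))"
    unfolding dcx_homotopy_bas[OF s(1) b(2)] homotopy_dbas[OF s(1)] sum.distrib
    using s(2,3) mates by (simp add: sum_distrib_left distrib_left bas_def mult.assoc[symmetric])
  also have "\<dots> = bas \<sigma> \<tau> + (\<Sum>x\<in>\<sigma>. if class_part b \<sigma> = {x} then - bas (insert b (\<sigma> - {x})) \<tau> else 0)"
    using homotopy_face_term[OF r s mates _ t] by simp
  finally show ?thesis .
qed

lemma homotopy_identity_not_mem:
  assumes r: "class_leader b" and s: "\<sigma> \<subseteq> A" "x0 \<in> \<sigma>" "b \<notin> \<sigma>" and t: "x0 \<in> \<tau>"
  shows "bas \<sigma> \<tau> - opt_bas (contract b \<sigma>) \<tau> - dcx xs (homotopy_bas b \<sigma>) \<tau> - homotopy b (dbas xs \<sigma>) \<tau> = 0"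
proof (cases "class_part b \<sigma> = {}")
  case True
  then have "homotopy_bas b (\<sigma> - {x}) t = 0" for x t
    unfolding homotopy_bas_def class_part_def by auto
  then have "homotopy b (dbas xs \<sigma>) \<tau> = 0"
    unfolding homotopy_dbas[OF s(1)] by (intro sum.neutral ballI) simp
  moreover have "homotopy_bas b \<sigma> = (\<lambda>t. 0)" using True unfolding homotopy_bas_def by simp
  moreover have "contract b \<sigma> = Some \<sigma>" using True s(2) unfolding contract_def by simp
  ultimately show ?thesis by (simp add: dcx_zero)
next
  case mates: False
  have "(\<Sum>x\<in>\<sigma>. if class_part b \<sigma> = {x} then - bas (insert b (\<sigma> - {x})) \<tau> else 0)
      = - opt_bas (contract b \<sigma>) \<tau>"
  proof (cases "card (class_part b \<sigma>) = 1")
    case True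
    then obtain x where x: "class_part b \<sigma> = {x}" by (meson card_1_singletonE)
    then have "x \<in> \<sigma>" unfolding class_part_def by auto
    moreover have "contract b \<sigma> = Some (insert b (\<sigma> - {x}))" using x s(2) unfolding contract_def by simp
    moreover have "finite \<sigma>" using s(1) rev_finite_subset by blast
    ultimately show ?thesis using x by (simp add: sum.delta')
  next
    case False
    then have "class_part b \<sigma> \<noteq> {x}" for x by auto
    moreover have "contract b \<sigma> = None" using False mates s(2) unfolding contract_def by auto
    ultimately show ?thesis by simp
  qed
  then show ?thesis using dcx_homotopy_plus_homotopy_dcx_bas[OF r s mates t] by simp
qed

lemma homotopy_identity_bas:
  assumes r: "class_leader b" and s: "\<sigma> \<subseteq> A"
  shows "(\<lambda>\<tau>. bas \<sigma> \<tau> - opt_bas (contract b \<sigma>) \<tau> - dcx xs (homotopy_bas b \<sigma>) \<tau>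
    - homotopy b (dbas xs \<sigma>) \<tau>) \<in> cochains A'" (is "?rest \<in> _")
proof (cases "x0 \<in> \<sigma>")
  case True
  have b: "b \<in> A" using class_leaderD[OF r] by simp
  have "?rest \<in> cochains A"
    by (intro cochains_diff bas_cochains s opt_bas_contract_cochains[OF b s] dcx_cochains
        homotopy_cochains[OF b])
  moreover have "x0 \<notin> \<tau>" if "?rest \<tau> \<noteq> 0" for \<tau>
  proof
    assume "x0 \<in> \<tau>"
    then have "?rest \<tau> = 0"
      using homotopy_identity_mem[OF r s True] homotopy_identity_not_mem[OF r s True]
      by (cases "b \<in> \<sigma>") simp_all
    then show False using that by simp
  qed
  ultimately show ?thesis unfolding cochains_def A_eq by blast
next
  case False
  then have "homotopy_bas b (\<sigma> - {x}) t = 0" for x t unfolding homotopy_bas_def by simp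
  then have "homotopy b (dbas xs \<sigma>) \<tau> = 0" for \<tau>
    unfolding homotopy_dbas[OF s] by (intro sum.neutral ballI) simp
  moreover have "contract b \<sigma> = None" "homotopy_bas b \<sigma> = (\<lambda>t. 0)"
    using False unfolding contract_def homotopy_bas_def by simp_all
  moreover have "\<sigma> \<subseteq> A'" using s False A_eq by auto
  ultimately show ?thesis using bas_cochains[of \<sigma> A'] by (simp add: dcx_zero)
qed

lemma homotopy_identity:
  assumes r: "class_leader b" and f: "f \<in> cochains A"
  shows "(\<lambda>\<tau>. f \<tau> - contraction b f \<tau> - dcx xs (homotopy b f) \<tau> - homotopy b (dcx xs f) \<tau>) \<in> cochains A'"
proof -
  define K where "K \<sigma> = (\<lambda>\<tau>. bas \<sigma> \<tau> - opt_bas (contract b \<sigma>) \<tau> - dcx xs (homotopy_bas b \<sigma>) \<tau>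
    - homotopy b (dbas xs \<sigma>) \<tau>)" for \<sigma>
  have "lin_map A K f = (\<lambda>\<tau>. lin_map A bas f \<tau> - lin_map A (\<lambda>\<sigma>. opt_bas (contract b \<sigma>)) f \<tau>
      - lin_map A (\<lambda>\<sigma>. dcx xs (homotopy_bas b \<sigma>)) f \<tau> - lin_map A (\<lambda>\<sigma>. homotopy b (dbas xs \<sigma>)) f \<tau>)"
    unfolding K_def lin_map_matrix_diff ..
  also have "\<dots> = (\<lambda>\<tau>. f \<tau> - contraction b f \<tau> - dcx xs (homotopy b f) \<tau> - homotopy b (dcx xs f) \<tau>)"
    unfolding lin_map_bas_expansion[OF finite_set f] contraction_def homotopy_def dcx_eq_lin_map lin_map_comp ..
  finally have "lin_map A K f = \<dots>" .
  moreover have "lin_map A K f \<in> cochains A'"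
    by (rule lin_map_cochains) (unfold K_def, rule homotopy_identity_bas[OF r])
  ultimately show ?thesis by simp
qed

lemma contraction_chain_map:
  assumes r: "class_leader b" and f: "f \<in> cochains A"
  shows "(\<lambda>\<tau>. dcx xs (contraction b f) \<tau> - contraction b (dcx xs f) \<tau>) \<in> cochains A'"
proof -
  have "(\<lambda>\<tau>. dcx xs f \<tau> - contraction b (dcx xs f) \<tau> - dcx xs (homotopy b (dcx xs f)) \<tau>) \<in> cochains A'"
    using homotopy_identity[OF r dcx_cochains] by (simp add: dcx_dcx[OF distinct] homotopy_def lin_map_zero)
  moreover have "(\<lambda>\<tau>. dcx xs f \<tau> - dcx xs (contraction b f) \<tau> - dcx xs (homotopy b (dcx xs f)) \<tau>) \<in> cochains A'"
    using dcx_cochains_mono[where xs = xs, OF homotopy_identity[OF r f]]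
    by (simp add: dcx_diff dcx_dcx[OF distinct])
  ultimately have "(\<lambda>\<tau>. (dcx xs f \<tau> - contraction b (dcx xs f) \<tau> - dcx xs (homotopy b (dcx xs f)) \<tau>)
      - (dcx xs f \<tau> - dcx xs (contraction b f) \<tau> - dcx xs (homotopy b (dcx xs f)) \<tau>)) \<in> cochains A'"
    by (rule cochains_diff)
  then show ?thesis by simp
qed

primrec contract_seq :: "'v set list \<Rightarrow> 'v set set \<Rightarrow> 'v set set option" where
  "contract_seq [] \<sigma> = Some \<sigma>"
| "contract_seq (b # bs) \<sigma> = Option.bind (contract_seq bs \<sigma>) (contract b)"

definition contraction_seq :: "'v set list \<Rightarrow> ('v set set \<Rightarrow> rat) \<Rightarrow> 'v set set \<Rightarrow> rat" where
  "contraction_seq bs = lin_map A (\<lambda>\<sigma>. opt_bas (contract_seq bs \<sigma>))"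

lemma contract_seq_subset: "set bs \<subseteq> A \<Longrightarrow> \<sigma> \<subseteq> A \<Longrightarrow> contract_seq bs \<sigma> = Some \<tau> \<Longrightarrow> \<tau> \<subseteq> A"
proof (induction bs arbitrary: \<tau>)
  case Nil
  then show ?case by simp
next
  case (Cons b bs)
  then obtain \<rho> where "contract_seq bs \<sigma> = Some \<rho>" "contract b \<rho> = Some \<tau>"
    by (cases "contract_seq bs \<sigma>") auto
  then show ?case using Cons contract_subset[of b \<rho> \<tau>] by auto
qed

lemma contraction_seq_bas:
  "set bs \<subseteq> A \<Longrightarrow> \<sigma> \<subseteq> A \<Longrightarrow> contraction_seq bs (bas \<sigma>) = opt_bas (contract_seq bs \<sigma>)"
  unfolding contraction_seq_def by (rule lin_map_bas) simp

lemma contraction_seq_Nil: "f \<in> cochains A \<Longrightarrow> contraction_seq [] f = f"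
  unfolding contraction_seq_def by (simp add: lin_map_bas_expansion)

lemma contraction_seq_Cons:
  assumes "set (b # bs) \<subseteq> A"
  shows "contraction_seq (b # bs) f = contraction b (contraction_seq bs f)"
proof -
  have "contraction b (contraction_seq bs f) = lin_map A (\<lambda>\<sigma>. contraction b (opt_bas (contract_seq bs \<sigma>))) f"
    unfolding contraction_seq_def contraction_def lin_map_comp ..
  also have "\<dots> = lin_map A (\<lambda>\<sigma>. opt_bas (contract_seq (b # bs) \<sigma>)) f"
  proof (rule lin_map_cong)
    fix \<sigma> assume \<sigma>: "\<sigma> \<subseteq> A"
    show "contraction b (opt_bas (contract_seq bs \<sigma>)) = opt_bas (contract_seq (b # bs) \<sigma>)"
    proof (cases "contract_seq bs \<sigma>")
      case None
      then show ?thesis by (simp add: contraction_def lin_map_zero)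
    next
      case (Some \<tau>)
      then have "\<tau> \<subseteq> A" using contract_seq_subset[of bs \<sigma> \<tau>] assms \<sigma> by auto
      then show ?thesis using Some by (simp add: contraction_def lin_map_bas)
    qed
  qed
  finally show ?thesis unfolding contraction_seq_def by simp
qed

lemma contraction_seq_cochains: "set bs \<subseteq> A \<Longrightarrow> contraction_seq bs f \<in> cochains A"
  unfolding contraction_seq_def
proof (rule lin_map_cochains)
  fix \<sigma> assume "set bs \<subseteq> A" "\<sigma> \<subseteq> A"
  then show "opt_bas (contract_seq bs \<sigma>) \<in> cochains A"
    using contract_seq_subset[of bs \<sigma>]
    by (cases "contract_seq bs \<sigma>") (auto intro: bas_cochains cochains_zero)
qed

lemma contract_seq_without_x0: "x0 \<notin> \<sigma> \<Longrightarrow> contract_seq bs \<sigma> = None \<or> contract_seq bs \<sigma> = Some \<sigma>"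
  by (induction bs) (auto simp: contract_def)

lemma contraction_seq_A':
  assumes "f \<in> cochains A'"
  shows "contraction_seq bs f \<in> cochains A'"
  unfolding contraction_seq_def
proof (rule lin_map_cochains)
  fix \<sigma> assume "f \<sigma> \<noteq> 0"
  then have "\<sigma> \<subseteq> A'" using assms unfolding cochains_def by auto
  moreover have "x0 \<notin> \<sigma>" using \<open>\<sigma> \<subseteq> A'\<close> x0_notin_A' by auto
  ultimately show "opt_bas (contract_seq bs \<sigma>) \<in> cochains A'"
    using contract_seq_without_x0[of \<sigma> bs] by (auto intro: bas_cochains cochains_zero)
qed

lemma contraction_seq_chain_map:
  assumes "set bs \<subseteq> Collect class_leader" "f \<in> cochains A"
  shows "(\<lambda>\<tau>. dcx xs (contraction_seq bs f) \<tau> - contraction_seq bs (dcx xs f) \<tau>) \<in> cochains A'"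
  using assms(1)
proof (induction bs)
  case Nil
  then show ?case
    using contraction_seq_Nil[OF assms(2)] contraction_seq_Nil[OF dcx_cochains] by (simp add: cochains_zero)
next
  case (Cons b bs)
  have b: "class_leader b" using Cons.prems by auto
  have bsA: "set (b # bs) \<subseteq> A" using Cons.prems class_leaderD by auto
  have g: "contraction_seq bs f \<in> cochains A" by (rule contraction_seq_cochains) (use bsA in auto)
  have "contraction b (\<lambda>\<tau>. dcx xs (contraction_seq bs f) \<tau> - contraction_seq bs (dcx xs f) \<tau>) = (\<lambda>t. 0)"
    by (rule contraction_A'_zero[OF Cons.IH]) (use Cons.prems in auto)
  then have "contraction b (dcx xs (contraction_seq bs f)) = contraction b (contraction_seq bs (dcx xs f))"
    unfolding contraction_def lin_map_diff by (simp add: fun_eq_iff)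
  then show ?case
    using contraction_chain_map[OF b g] unfolding contraction_seq_Cons[OF bsA] by simp
qed

abbreviation "Vgens \<equiv> Igens xs \<union> {bas \<sigma> | \<sigma>. \<sigma> \<subseteq> A'}"

lemma Vpre_eq: "Vpre xs = qspan Vgens"
  unfolding Vpre_def ..

lemma Vpre_zero: "(\<lambda>t. 0) \<in> Vpre xs"
  unfolding Vpre_eq by (rule qspan_zero)

lemma Vpre_add: "f \<in> Vpre xs \<Longrightarrow> g \<in> Vpre xs \<Longrightarrow> (\<lambda>t. f t + g t) \<in> Vpre xs"
  unfolding Vpre_eq by (rule qspan_add)

lemma Vpre_cochains: "c \<in> Vpre xs \<Longrightarrow> c \<in> cochains A"
  unfolding Vpre_eq
  by (rule qspan_cochains) (auto simp: Igens_def edges_def A_eq intro!: cochains_diff bas_cochains)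

lemma cochains_A'_Vpre:
  assumes "f \<in> cochains A'"
  shows "f \<in> Vpre xs"
proof -
  have "lin_map A bas f \<in> qspan Vgens"
  proof (rule lin_map_qspan[OF finite_set])
    fix \<sigma> assume "f \<sigma> \<noteq> 0"
    then have "\<sigma> \<subseteq> A'" using assms unfolding cochains_def by auto
    then show "bas \<sigma> \<in> qspan Vgens" by (intro qspan_gen) blast
  qed
  moreover have "f \<in> cochains A" using assms cochains_mono A_eq by auto
  ultimately show ?thesis unfolding Vpre_eq by (simp add: lin_map_bas_expansion)
qed

lemma bas_swap_Vpre:
  assumes "(u, v) \<in> edges xs" "Y \<subseteq> A - {x0, u, v}"
  shows "(\<lambda>t. bas (insert x0 (insert u Y)) t - bas (insert x0 (insert v Y)) t) \<in> Vpre xs"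
  unfolding Vpre_eq by (rule qspan_gen) (use assms in \<open>auto simp: Igens_def\<close>)

lemma bas_two_mates_Vpre:
  assumes "(u, v) \<in> edges xs" "Y \<subseteq> A - {x0, u, v}"
  shows "bas (insert x0 (insert u (insert v Y))) \<in> Vpre xs"
  unfolding Vpre_eq by (rule qspan_gen) (use assms in \<open>auto simp: Igens_def\<close>)

lemma bas_class_mates_Vpre:
  assumes "\<sigma> \<subseteq> A" "x0 \<in> \<sigma>" "u \<in> \<sigma>" "v \<in> \<sigma>" "u \<in> A'" "v \<in> A'" "u \<noteq> v" "x0 \<inter> u = x0 \<inter> v"
  shows "bas \<sigma> \<in> Vpre xs"
proof -
  have "(u, v) \<in> edges xs" unfolding edges_def using assms by auto
  moreover have "\<sigma> - {x0, u, v} \<subseteq> A - {x0, u, v}" using assms(1) by auto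
  moreover have "insert x0 (insert u (insert v (\<sigma> - {x0, u, v}))) = \<sigma>" using assms(2-4) by auto
  ultimately show ?thesis using bas_two_mates_Vpre[of u v "\<sigma> - {x0, u, v}"] by simp
qed

lemma bas_minus_contract_single_Vpre:
  assumes b: "b \<in> A'" and s: "\<sigma> \<subseteq> A" "x0 \<in> \<sigma>" and single: "class_part b \<sigma> = {u}"
  shows "(\<lambda>t. bas \<sigma> t - opt_bas (contract b \<sigma>) t) \<in> Vpre xs"
proof -
  have "u \<in> \<sigma>" "u \<noteq> x0" "x0 \<inter> u = x0 \<inter> b" using single unfolding class_part_def by auto
  then have u: "u \<in> \<sigma>" "u \<in> A'" "x0 \<inter> u = x0 \<inter> b" using s(1) A_eq by auto
  have contr: "contract b \<sigma> = Some (insert b (\<sigma> - {u}))" using s(2) single unfolding contract_def by simp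
  show ?thesis
  proof (cases "u = b")
    case True
    then have "insert b (\<sigma> - {u}) = \<sigma>" using u by auto
    then show ?thesis using contr Vpre_zero by simp
  next
    case False
    have "b \<notin> \<sigma>"
    proof
      assume "b \<in> \<sigma>"
      then have "b \<in> class_part b \<sigma>" using b x0_notin_A' unfolding class_part_def by auto
      then show False using single False by auto
    qed
    have "(u, b) \<in> edges xs" unfolding edges_def using u b False by auto
    moreover have "\<sigma> - {x0, u} \<subseteq> A - {x0, u, b}" using s(1) \<open>b \<notin> \<sigma>\<close> by auto
    moreover have "insert x0 (insert u (\<sigma> - {x0, u})) = \<sigma>"
      and "insert x0 (insert b (\<sigma> - {x0, u})) = insert b (\<sigma> - {u})"
      using s(2) u x0_notin_A' by auto
    ultimately show ?thesis using bas_swap_Vpre[of u b "\<sigma> - {x0, u}"] contr by simp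
  qed
qed

lemma bas_minus_contract_Vpre:
  assumes b: "b \<in> A'" and s: "\<sigma> \<subseteq> A"
  shows "(\<lambda>t. bas \<sigma> t - opt_bas (contract b \<sigma>) t) \<in> Vpre xs"
proof (cases "x0 \<in> \<sigma>")
  case False
  then have "contract b \<sigma> = None" unfolding contract_def by simp
  moreover have "\<sigma> \<subseteq> A'" using False s A_eq by auto
  ultimately show ?thesis using cochains_A'_Vpre[OF bas_cochains[of \<sigma> A']] by simp
next
  case x0: True
  consider "class_part b \<sigma> = {}" | u where "class_part b \<sigma> = {u}"
    | u v where "u \<in> class_part b \<sigma>" "v \<in> class_part b \<sigma>" "u \<noteq> v"
    by blast
  then show ?thesis
  proof cases
    case 1
    then have "contract b \<sigma> = Some \<sigma>" using x0 unfolding contract_def by simp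
    then show ?thesis using Vpre_zero by simp
  next
    case 2
    then show ?thesis by (rule bas_minus_contract_single_Vpre[OF b s x0])
  next
    case (3 u v)
    then have "u \<in> \<sigma>" "u \<noteq> x0" "v \<in> \<sigma>" "v \<noteq> x0" "x0 \<inter> u = x0 \<inter> v" unfolding class_part_def by auto
    then have "u \<in> A'" "v \<in> A'" using s A_eq by auto
    then have "bas \<sigma> \<in> Vpre xs"
      using bas_class_mates_Vpre[OF s x0] \<open>u \<in> \<sigma>\<close> \<open>v \<in> \<sigma>\<close> \<open>u \<noteq> v\<close> \<open>x0 \<inter> u = x0 \<inter> v\<close> by blast
    moreover have "contract b \<sigma> = None"
      using contract_two_mates[OF _ 3] s rev_finite_subset by blast
    ultimately show ?thesis by simp
  qed
qed

lemma id_minus_contraction_Vpre: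
  assumes "b \<in> A'" "g \<in> cochains A"
  shows "(\<lambda>t. g t - contraction b g t) \<in> Vpre xs"
proof -
  have "(\<lambda>t. g t - contraction b g t) = lin_map A (\<lambda>\<sigma> t. bas \<sigma> t - opt_bas (contract b \<sigma>) t) g"
    unfolding lin_map_matrix_diff contraction_def lin_map_bas_expansion[OF finite_set assms(2)] ..
  also have "\<dots> \<in> Vpre xs" unfolding Vpre_eq
    by (rule lin_map_qspan[OF finite_set]) (use bas_minus_contract_Vpre[OF assms(1)] Vpre_eq in auto)
  finally show ?thesis .
qed

lemma id_minus_contraction_seq_Vpre:
  assumes "set bs \<subseteq> A'" "f \<in> cochains A"
  shows "(\<lambda>t. f t - contraction_seq bs f t) \<in> Vpre xs"
  using assms(1)
proof (induction bs)
  case Nil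
  then show ?case using contraction_seq_Nil[OF assms(2)] Vpre_zero by simp
next
  case (Cons b bs)
  have bsA: "set (b # bs) \<subseteq> A" using Cons.prems A_eq by auto
  have g: "contraction_seq bs f \<in> cochains A" by (rule contraction_seq_cochains) (use bsA in auto)
  have "(\<lambda>t. (f t - contraction_seq bs f t) + (contraction_seq bs f t - contraction b (contraction_seq bs f) t))
      \<in> Vpre xs"
    using Cons id_minus_contraction_Vpre[OF _ g, of b] by (intro Vpre_add) auto
  then show ?case unfolding contraction_seq_Cons[OF bsA] by simp
qed

lemma homotopy_Vpre:
  assumes "class_leader b"
  shows "homotopy b f \<in> Vpre xs"
  unfolding homotopy_def Vpre_eq
proof (rule lin_map_qspan[OF finite_set])
  fix \<sigma> assume s: "\<sigma> \<subseteq> A"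
  have b: "b \<in> A'" "b \<in> A" using class_leaderD[OF assms] by auto
  show "homotopy_bas b \<sigma> \<in> qspan Vgens"
  proof (cases "x0 \<in> \<sigma> \<and> b \<notin> \<sigma> \<and> class_part b \<sigma> \<noteq> {}")
    case True
    then obtain v where v: "v \<in> \<sigma>" "v \<noteq> x0" "x0 \<inter> v = x0 \<inter> b" unfolding class_part_def by auto
    have "bas (insert b \<sigma>) \<in> Vpre xs"
      by (rule bas_class_mates_Vpre[of _ b v]) (use True v s b A_eq in auto)
    then show ?thesis
      using True qspan_scale[of "bas (insert b \<sigma>)" Vgens "face_sign xs \<sigma> b"]
      unfolding homotopy_bas_def Vpre_eq by simp
  next
    case False
    then have "homotopy_bas b \<sigma> = (\<lambda>t. 0)" unfolding homotopy_bas_def by (rule if_not_P)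
    then show ?thesis using qspan_zero by simp
  qed
qed

lemma contract_cases:
  "contract b \<tau> = None \<or> contract b \<tau> = Some \<tau> \<or> contract b \<tau> = Some (insert b (\<tau> - class_part b \<tau>))"
  unfolding contract_def by auto

lemma contract_seq_two_mates:
  assumes "set bs \<subseteq> A" "\<sigma> \<subseteq> A" "u \<in> \<sigma>" "v \<in> \<sigma>" "u \<noteq> v" "u \<noteq> x0" "v \<noteq> x0" "x0 \<inter> u = x0 \<inter> v"
  shows "(contract_seq bs \<sigma> = None \<or> (\<exists>\<tau>. contract_seq bs \<sigma> = Some \<tau> \<and> u \<in> \<tau> \<and> v \<in> \<tau> \<and> \<tau> \<subseteq> A))
    \<and> ((\<exists>b\<in>set bs. x0 \<inter> b = x0 \<inter> u) \<longrightarrow> contract_seq bs \<sigma> = None)"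
  using assms(1)
proof (induction bs)
  case Nil
  then show ?case using assms by auto
next
  case (Cons b bs)
  show ?case
  proof (cases "contract_seq bs \<sigma>")
    case None
    then show ?thesis by simp
  next
    case (Some \<tau>)
    with Cons have \<tau>: "u \<in> \<tau>" "v \<in> \<tau>" "\<tau> \<subseteq> A" and "\<not> (\<exists>b\<in>set bs. x0 \<inter> b = x0 \<inter> u)" by auto
    show ?thesis
    proof (cases "x0 \<inter> b = x0 \<inter> u")
      case True
      then have "u \<in> class_part b \<tau>" "v \<in> class_part b \<tau>" using \<tau> assms(6-8) unfolding class_part_def by auto
      then have "contract b \<tau> = None" using contract_two_mates \<tau>(3) rev_finite_subset assms(5) by blast
      then show ?thesis using Some by simp
    next
      case False
      then have "u \<notin> class_part b \<tau>" "v \<notin> class_part b \<tau>" using assms(8) unfolding class_part_def by auto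
      then have "contract b \<tau> = None \<or> (\<exists>\<tau>'. contract b \<tau> = Some \<tau>' \<and> u \<in> \<tau>' \<and> v \<in> \<tau>' \<and> \<tau>' \<subseteq> A)"
        using contract_cases[of b \<tau>] \<tau> contract_subset[of b \<tau>] Cons.prems by auto
      then show ?thesis using Some False \<open>\<not> (\<exists>b\<in>set bs. x0 \<inter> b = x0 \<inter> u)\<close> by auto
    qed
  qed
qed

lemma class_part_insert_other: "\<not> (y \<noteq> x0 \<and> x0 \<inter> y = x0 \<inter> b) \<Longrightarrow> class_part b (insert y \<sigma>) = class_part b \<sigma>"
  unfolding class_part_def by auto

lemma contract_swap_same_class:
  assumes "u \<in> A'" "v \<in> A'" "x0 \<inter> b = x0 \<inter> u" "x0 \<inter> u = x0 \<inter> v" "Y \<subseteq> A - {x0, u, v}"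
  shows "contract b (insert x0 (insert u Y)) = contract b (insert x0 (insert v Y))"
proof -
  define t1 where "t1 = insert x0 (insert u Y)"
  define t2 where "t2 = insert x0 (insert v Y)"
  have ux: "u \<noteq> x0" "v \<noteq> x0" using assms(1,2) x0_notin_A' by auto
  have c1: "class_part b t1 = insert u (class_part b Y)"
    unfolding t1_def class_part_def using assms(3) ux by auto
  have c2: "class_part b t2 = insert v (class_part b Y)"
    unfolding t2_def class_part_def using assms(3,4) ux by auto
  show ?thesis
  proof (cases "class_part b Y = {}")
    case True
    have "t1 - {u} = insert x0 Y" "t2 - {v} = insert x0 Y" unfolding t1_def t2_def using assms(5) ux by auto
    moreover have "x0 \<in> t1" "x0 \<in> t2" unfolding t1_def t2_def by auto
    ultimately have "contract b t1 = contract b t2" unfolding contract_def using c1 c2 True by simp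
    then show ?thesis unfolding t1_def t2_def .
  next
    case False
    then obtain w where w: "w \<in> class_part b Y" by auto
    have "w \<noteq> u" "w \<noteq> v" using w assms(5) unfolding class_part_def by auto
    have "finite Y" using assms(5) rev_finite_subset[of A Y] by auto
    then have "finite t1" "finite t2" unfolding t1_def t2_def by auto
    then have "contract b t1 = None" "contract b t2 = None"
      using contract_two_mates[of t1 u b w] contract_two_mates[of t2 v b w] c1 c2 w \<open>w \<noteq> u\<close> \<open>w \<noteq> v\<close>
      by auto
    then show ?thesis unfolding t1_def t2_def by simp
  qed
qed

lemma contract_swap_other_class:
  assumes "b \<in> A'" "u \<in> A'" "v \<in> A'" "x0 \<inter> b \<noteq> x0 \<inter> u" "x0 \<inter> u = x0 \<inter> v" "Y \<subseteq> A - {x0, u, v}"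
  shows "contract b (insert x0 (insert u Y)) = None \<and> contract b (insert x0 (insert v Y)) = None \<or>
    (\<exists>Y'. Y' \<subseteq> A - {x0, u, v} \<and>
      contract b (insert x0 (insert u Y)) = Some (insert x0 (insert u Y')) \<and>
      contract b (insert x0 (insert v Y)) = Some (insert x0 (insert v Y')))"
proof -
  define t1 where "t1 = insert x0 (insert u Y)"
  define t2 where "t2 = insert x0 (insert v Y)"
  have ux: "u \<noteq> x0" "v \<noteq> x0" "b \<noteq> x0" using assms(1-3) x0_notin_A' by auto
  have x0t: "x0 \<in> t1" "x0 \<in> t2" unfolding t1_def t2_def by auto
  have nu: "x0 \<inter> u \<noteq> x0 \<inter> b" "x0 \<inter> v \<noteq> x0 \<inter> b" using assms(4,5) by auto
  have c1: "class_part b t1 = class_part b Y"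
    unfolding t1_def using class_part_insert_other[of x0] class_part_insert_other[of u] nu by simp
  have c2: "class_part b t2 = class_part b Y"
    unfolding t2_def using class_part_insert_other[of x0] class_part_insert_other[of v] nu by simp
  consider "class_part b Y = {}" | "card (class_part b Y) = 1" | "class_part b Y \<noteq> {}" "card (class_part b Y) \<noteq> 1"
    by blast
  then show ?thesis
  proof cases
    case 1
    then have "contract b t1 = Some t1" "contract b t2 = Some t2" unfolding contract_def using x0t c1 c2 by auto
    then show ?thesis using assms(6) unfolding t1_def t2_def by blast
  next
    case 2
    define Y' where "Y' = insert b (Y - class_part b Y)"
    have notin: "x0 \<notin> class_part b Y" "u \<notin> class_part b Y" "v \<notin> class_part b Y"
      using assms(6) unfolding class_part_def by blast+
    have "b \<noteq> u" "b \<noteq> v" using assms(4,5) by auto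
    then have "Y' \<subseteq> A - {x0, u, v}" unfolding Y'_def using assms(1,6) ux A_eq by auto
    moreover have "contract b t1 = Some (insert x0 (insert u Y'))" "contract b t2 = Some (insert x0 (insert v Y'))"
      unfolding contract_def using x0t c1 c2 2 notin unfolding t1_def t2_def Y'_def by auto
    ultimately show ?thesis unfolding t1_def t2_def by blast
  next
    case 3
    then have "contract b t1 = None" "contract b t2 = None" unfolding contract_def using x0t c1 c2 by auto
    then show ?thesis unfolding t1_def t2_def by simp
  qed
qed

lemma contract_seq_swap:
  assumes "set bs \<subseteq> A'" "u \<in> A'" "v \<in> A'" "x0 \<inter> u = x0 \<inter> v" "Y \<subseteq> A - {x0, u, v}"
  shows "contract_seq bs (insert x0 (insert u Y)) = contract_seq bs (insert x0 (insert v Y)) \<or>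
    ((\<forall>b\<in>set bs. x0 \<inter> b \<noteq> x0 \<inter> u) \<and> (\<exists>Y'. Y' \<subseteq> A - {x0, u, v} \<and>
      contract_seq bs (insert x0 (insert u Y)) = Some (insert x0 (insert u Y')) \<and>
      contract_seq bs (insert x0 (insert v Y)) = Some (insert x0 (insert v Y'))))"
  using assms(1)
proof (induction bs)
  case Nil
  then show ?case using assms(5) by auto
next
  case (Cons b bs)
  show ?case
  proof (cases "contract_seq bs (insert x0 (insert u Y)) = contract_seq bs (insert x0 (insert v Y))")
    case True
    then show ?thesis by simp
  next
    case False
    with Cons obtain Y' where Y': "Y' \<subseteq> A - {x0, u, v}"
      "contract_seq bs (insert x0 (insert u Y)) = Some (insert x0 (insert u Y'))"
      "contract_seq bs (insert x0 (insert v Y)) = Some (insert x0 (insert v Y'))"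
      and others: "\<forall>b\<in>set bs. x0 \<inter> b \<noteq> x0 \<inter> u"
      by auto
    have "b \<in> A'" using Cons.prems by simp
    show ?thesis
    proof (cases "x0 \<inter> b = x0 \<inter> u")
      case True
      then show ?thesis using contract_swap_same_class[OF assms(2,3) True assms(4) Y'(1)] Y'(2,3) by simp
    next
      case False
      with contract_swap_other_class[OF \<open>b \<in> A'\<close> assms(2,3) False assms(4) Y'(1)]
      show ?thesis using Y'(2,3) others by auto
    qed
  qed
qed

text \<open>Every class has its leader in \<open>bs\<close>: contracting onto it kills a generator containing two
  class mates, and sends both terms of a swap generator to the same simplex.\<close>

lemma contraction_seq_Vgens:
  assumes bs: "set bs = Collect class_leader" and g: "g \<in> Vgens"
  shows "contraction_seq bs g \<in> cochains A'"
proof -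
  have bsA': "set bs \<subseteq> A'" and bsA: "set bs \<subseteq> A" using bs class_leaderD by auto
  have x0A: "x0 \<in> A" using A_eq by auto
  have has_leader: "\<exists>b\<in>set bs. x0 \<inter> b = x0 \<inter> u" if "u \<in> A'" for u
    using class_leader_exists[OF that] bs by auto
  from g consider (A') \<sigma> where "g = bas \<sigma>" "\<sigma> \<subseteq> A'"
    | (swap) u v Y where "g = (\<lambda>t. bas (insert x0 (insert u Y)) t - bas (insert x0 (insert v Y)) t)"
        "(u, v) \<in> edges xs" "Y \<subseteq> A - {x0, u, v}"
    | (mates) u v Y where "g = bas (insert x0 (insert u (insert v Y)))" "(u, v) \<in> edges xs" "Y \<subseteq> A - {x0, u, v}"
    unfolding Igens_def by blast
  then show ?thesis
  proof cases
    case A'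
    then show ?thesis using contraction_seq_A'[OF bas_cochains] by simp
  next
    case swap
    have uv: "u \<in> A'" "v \<in> A'" "x0 \<inter> u = x0 \<inter> v" using swap(2) unfolding edges_def by auto
    have s: "insert x0 (insert u Y) \<subseteq> A" "insert x0 (insert v Y) \<subseteq> A" using swap(3) uv x0A A_eq by auto
    have "contract_seq bs (insert x0 (insert u Y)) = contract_seq bs (insert x0 (insert v Y))"
      using contract_seq_swap[OF bsA' uv swap(3)] has_leader[OF uv(1)] by blast
    then have "contraction_seq bs g = (\<lambda>t. 0)"
      unfolding swap(1) contraction_seq_def lin_map_diff
      unfolding contraction_seq_def[symmetric] contraction_seq_bas[OF bsA s(1)] contraction_seq_bas[OF bsA s(2)]
      by simp
    then show ?thesis using cochains_zero by simp
  next
    case mates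
    have uv: "u \<in> A'" "v \<in> A'" "x0 \<inter> u = x0 \<inter> v" "u \<noteq> v" using mates(2) unfolding edges_def by auto
    have ux: "u \<noteq> x0" "v \<noteq> x0" using uv x0_notin_A' by auto
    have s: "insert x0 (insert u (insert v Y)) \<subseteq> A" using mates(3) uv x0A A_eq by auto
    have "contract_seq bs (insert x0 (insert u (insert v Y))) = None"
      using contract_seq_two_mates[OF bsA s, of u v] uv ux has_leader[OF uv(1)] by auto
    then have "contraction_seq bs g = (\<lambda>t. 0)" unfolding mates(1) contraction_seq_bas[OF bsA s] by simp
    then show ?thesis using cochains_zero by simp
  qed
qed

lemma contraction_seq_Vpre:
  assumes bs: "set bs = Collect class_leader" and c: "c \<in> Vpre xs"
  shows "contraction_seq bs c \<in> cochains A'"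
proof -
  obtain S a where S: "S \<subseteq> Vgens" "c = (\<lambda>t. \<Sum>g\<in>S. a g * g t)"
    using c unfolding Vpre_eq qspan_def by blast
  have "contraction_seq bs c = (\<lambda>\<tau>. \<Sum>g\<in>S. a g * contraction_seq bs g \<tau>)"
    unfolding S(2) contraction_seq_def lin_map_lincomb ..
  also have "\<dots> \<in> cochains A'"
    by (rule cochains_lincomb) (use contraction_seq_Vgens[OF bs] S(1) in blast)
  finally show ?thesis .
qed

section \<open>Acyclicity of \<open>V\<close>\<close>

lemma contraction_seq_homotopic:
  assumes c: "c \<in> Vpre xs" and dc: "dcx xs c \<in> cochains A'"
  shows "set bs \<subseteq> Collect class_leader
    \<Longrightarrow> \<exists>h\<in>Vpre xs. (\<lambda>t. c t - contraction_seq bs c t - dcx xs h t) \<in> cochains A'"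
proof (induction bs)
  case Nil
  have "(\<lambda>t. c t - contraction_seq [] c t - dcx xs (\<lambda>t. 0) t) = (\<lambda>t. 0)"
    using contraction_seq_Nil[OF Vpre_cochains[OF c]] by (simp add: dcx_zero)
  then show ?case using Vpre_zero cochains_zero by metis
next
  case (Cons b bs)
  then obtain h where h: "h \<in> Vpre xs" "(\<lambda>t. c t - contraction_seq bs c t - dcx xs h t) \<in> cochains A'"
    by auto
  have b: "class_leader b" and bsA: "set (b # bs) \<subseteq> A" using Cons.prems class_leaderD by auto
  have cA: "c \<in> cochains A" by (rule Vpre_cochains[OF c])
  define g where "g = contraction_seq bs c"
  have gA: "g \<in> cochains A" unfolding g_def by (rule contraction_seq_cochains) (use bsA in auto)
  have "(\<lambda>\<tau>. (dcx xs g \<tau> - contraction_seq bs (dcx xs c) \<tau>) + contraction_seq bs (dcx xs c) \<tau>) \<in> cochains A'"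
    using contraction_seq_chain_map[OF _ cA, of bs] Cons.prems contraction_seq_A'[OF dc]
    unfolding g_def by (intro cochains_add) auto
  then have "homotopy b (dcx xs g) = (\<lambda>t. 0)" by (intro homotopy_A'_zero) simp
  then have "(\<lambda>\<tau>. g \<tau> - contraction b g \<tau> - dcx xs (homotopy b g) \<tau>) \<in> cochains A'"
    using homotopy_identity[OF b gA] by simp
  then have "(\<lambda>t. (c t - g t - dcx xs h t) + (g t - contraction b g t - dcx xs (homotopy b g) t)) \<in> cochains A'"
    by (rule cochains_add[OF h(2)[folded g_def]])
  moreover have "(\<lambda>t. (c t - g t - dcx xs h t) + (g t - contraction b g t - dcx xs (homotopy b g) t))
      = (\<lambda>t. c t - contraction_seq (b # bs) c t - dcx xs (\<lambda>t. h t + homotopy b g t) t)"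
    unfolding contraction_seq_Cons[OF bsA] g_def[symmetric] dcx_add by (simp add: fun_eq_iff)
  ultimately have "(\<lambda>t. c t - contraction_seq (b # bs) c t - dcx xs (\<lambda>t. h t + homotopy b g t) t) \<in> cochains A'"
    by simp
  moreover have "(\<lambda>t. h t + homotopy b g t) \<in> Vpre xs" using h(1) homotopy_Vpre[OF b] by (rule Vpre_add)
  ultimately show ?case by blast
qed

lemma Vpre_dcx_closed:
  assumes c: "c \<in> Vpre xs"
  shows "dcx xs c \<in> Vpre xs"
proof -
  obtain bs where bs: "set bs = Collect class_leader" using class_leaders_list by blast
  then have bsA': "set bs \<subseteq> A'" using class_leaderD by auto
  have chain: "(\<lambda>\<tau>. dcx xs (contraction_seq bs c) \<tau> - contraction_seq bs (dcx xs c) \<tau>) \<in> cochains A'"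
    using contraction_seq_chain_map[of bs c] bs Vpre_cochains[OF c] by simp
  have "dcx xs (contraction_seq bs c) \<in> cochains A'"
    by (rule dcx_cochains_mono[OF contraction_seq_Vpre[OF bs c]])
  from cochains_diff[OF this chain]
  have "(\<lambda>\<tau>. dcx xs (contraction_seq bs c) \<tau>
      - (dcx xs (contraction_seq bs c) \<tau> - contraction_seq bs (dcx xs c) \<tau>)) \<in> cochains A'" .
  then have "contraction_seq bs (dcx xs c) \<in> Vpre xs" using cochains_A'_Vpre by simp
  then have "(\<lambda>t. (dcx xs c t - contraction_seq bs (dcx xs c) t) + contraction_seq bs (dcx xs c) t) \<in> Vpre xs"
    using id_minus_contraction_seq_Vpre[OF bsA' dcx_cochains] by (intro Vpre_add)
  then show ?thesis by simp
qed

lemma Vpre_acyclic: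
  assumes c: "c \<in> Vpre xs" and dc: "dcx xs c \<in> cochains A'"
  shows "\<exists>h\<in>Vpre xs. (\<lambda>t. c t - dcx xs h t) \<in> cochains A'"
proof -
  obtain bs where bs: "set bs = Collect class_leader" using class_leaders_list by blast
  obtain h where h: "h \<in> Vpre xs" "(\<lambda>t. c t - contraction_seq bs c t - dcx xs h t) \<in> cochains A'"
    using contraction_seq_homotopic[OF c dc, of bs] bs by auto
  have "(\<lambda>t. (c t - contraction_seq bs c t - dcx xs h t) + contraction_seq bs c t) \<in> cochains A'"
    by (rule cochains_add[OF h(2) contraction_seq_Vpre[OF bs c]])
  then show ?thesis using h(1) by auto
qed

end

theorem lemma3p4:
  fixes xs :: "(complex^'n) set list"
  assumes "xs \<noteq> []" and "distinct xs" and "subspace_arrangement (set xs)"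
    and "\<forall>i j k. 1 \<le> i \<and> i < j \<and> j < k \<and> k < length xs \<and>
           hd xs \<inter> xs ! i = hd xs \<inter> xs ! k \<longrightarrow> hd xs \<inter> xs ! j = hd xs \<inter> xs ! i"
  shows "(\<forall>c \<in> Vpre xs. dcx xs c \<in> Vpre xs) \<and>
         (\<forall>c \<in> Vpre xs. dcx xs c \<in> cochains (set (tl xs)) \<longrightarrow>
            (\<exists>b \<in> Vpre xs. (\<lambda>t. c t - dcx xs b t) \<in> cochains (set (tl xs))))"
proof -
  interpret class_ordered_arrangement xs
    using assms(1,2,4) by unfold_locales
  show ?thesis using Vpre_dcx_closed Vpre_acyclic by blast
qed

end
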